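(* In the model described in the context, let $\hat\delta=(\bar Y^{T}_{\cdot\cdot1\cdot}-\bar Y^{C}_{\cdot\cdot1\cdot})-(\bar Y^{T}_{\cdot\cdot2\cdot}-\bar Y^{C}_{\cdot\cdot2\cdot})$, let $$\hat\sigma_e^2=\frac{SS_0}{4N_3N_2(n-1)},\qquad \hat\sigma_{\mathrm{grp}}^2=\frac1n\Big(\frac{SS_1}{4N_3N_2}-\hat\sigma_e^2\Big),\qquad \widehat{\operatorname{Var}}(\hat\delta)=\frac{4}{N_3N_2n}\big(\hat\sigma_e^2+nN_2\hat\sigma_{\mathrm{grp}}^2\big),$$ and $T=(\hat\delta-\delta)/\sqrt{\widehat{\operatorname{Var}}(\hat\delta)}$ (defined when $\widehat{\operatorname{Var}}(\hat\delta)>0$). Then as $N_3,N_2,n\to\infty$, $T$ converges in distribution to $N(0,1)$.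
   Context: Integers $N_3,N_2\ge1$, $n\ge2$. Observations $Y_{ijgk}$, $i=1,\dots,2N_3$, $j=1,\dots,N_2$, $g\in\{1,2\}$, $k=1,\dots,n$, satisfy $$Y_{ijgk}=\beta_0+\tau L_g+\xi X_i+\delta L_gX_i+u_i+u_{j(i)}+v_{g(i)}+\epsilon_{ijgk},$$ with $X_i=1$ for $i\le N_3$, $X_i=0$ otherwise, $L_1=1$, $L_2=0$, fixed $\beta_0,\tau,\xi,\delta\in\mathbb R$, and mutually independent $u_i\sim N(0,\sigma_3^2)$, $u_{j(i)}\sim N(0,\sigma_2^2)$, $v_{g(i)}\sim N(0,\sigma_{\mathrm{grp}}^2)$, $\epsilon_{ijgk}\sim N(0,\sigma_e^2)$ with fixed positive variances. (Equivalently the covariance of two observations in the same level-three unit $i$ is $\sigma_3^2+\sigma_2^2+\sigma_{\mathrm{grp}}^2$ for same $j$, same $g$, different $k$; $\sigma_3^2+\sigma_2^2$ for same $j$, different $g$; $\sigma_3^2+\sigma_{\mathrm{grp}}^2$ for different $j$, same $g$; $\sigma_3^2$ for different $j$ and $g$; observations in different level-three units are independent.) Averages: $\bar Y_{ijg\cdot}=\frac1n\sum_kY_{ijgk}$, $\bar Y^T_{\cdot\cdot g\cdot}=\frac{1}{N_3N_2n}\sum_{i\le N_3}\sum_{j,k}Y_{ijgk}$, $\bar Y^C_{\cdot\cdot g\cdot}=\frac{1}{N_3N_2n}\sum_{i> N_3}\sum_{j,k}Y_{ijgk}$. $SS_0=\sum_{i,j,g,k}(Y_{ijgk}-\bar Y_{ijg\cdot})^2$;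 $SS_1=n\big[\sum_{i\le N_3}\sum_j((\bar Y_{ij1\cdot}-\bar Y_{ij2\cdot})-(\bar Y^T_{\cdot\cdot1\cdot}-\bar Y^T_{\cdot\cdot2\cdot}))^2+\sum_{i>N_3}\sum_j((\bar Y_{ij1\cdot}-\bar Y_{ij2\cdot})-(\bar Y^C_{\cdot\cdot1\cdot}-\bar Y^C_{\cdot\cdot2\cdot}))^2\big]$. *)

theory Defs
  imports "HOL-Probability.Probability"
begin

text \<open>Labels of the mutually independent random effects of the three-level model.
  Level-three units i < 2*N3 (0-based; treated iff i < N3), level-two units j < N2,
  groups g in {1,2}, replicates k < n.\<close>
datatype eff = U3 nat | U2 nat nat | Vg nat nat | Eps nat nat nat nat

definition effects :: "nat \<Rightarrow> nat \<Rightarrow> nat \<Rightarrow> eff set" where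
  "effects N3 N2 n =
     {U3 i | i. i < 2*N3} \<union> {U2 i j | i j. i < 2*N3 \<and> j < N2}
     \<union> {Vg i g | i g. i < 2*N3 \<and> g \<in> {1,2}}
     \<union> {Eps i j g k | i j g k. i < 2*N3 \<and> j < N2 \<and> g \<in> {1,2} \<and> k < n}"

fun eff_sd :: "real \<Rightarrow> real \<Rightarrow> real \<Rightarrow> real \<Rightarrow> eff \<Rightarrow> real" where
  "eff_sd s3 s2 sg se (U3 _) = s3"
| "eff_sd s3 s2 sg se (U2 _ _) = s2"
| "eff_sd s3 s2 sg se (Vg _ _) = sg"
| "eff_sd s3 s2 sg se (Eps _ _ _ _) = se"

definition model_effects ::
  "'a measure \<Rightarrow> nat \<Rightarrow> nat \<Rightarrow> nat \<Rightarrow> real \<Rightarrow> real \<Rightarrow> real \<Rightarrow> real \<Rightarrow> (eff \<Rightarrow> 'a \<Rightarrow> real) \<Rightarrow> bool" where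
  "model_effects M N3 N2 n s3 s2 sg se Z \<longleftrightarrow>
     prob_space M \<and>
     prob_space.indep_vars M (\<lambda>_. borel) Z (effects N3 N2 n) \<and>
     (\<forall>e\<in>effects N3 N2 n.
        distributed M lborel (Z e) (\<lambda>x. ennreal (normal_density 0 (eff_sd s3 s2 sg se e) x)))"

definition Lg :: "nat \<Rightarrow> real" where "Lg g = (if g = 1 then 1 else 0)"
definition Xi :: "nat \<Rightarrow> nat \<Rightarrow> real" where "Xi N3 i = (if i < N3 then 1 else 0)"

definition Yobs ::
  "real \<Rightarrow> real \<Rightarrow> real \<Rightarrow> real \<Rightarrow> nat \<Rightarrow> (eff \<Rightarrow> 'a \<Rightarrow> real) \<Rightarrow> 'a \<Rightarrow> nat \<Rightarrow> nat \<Rightarrow> nat \<Rightarrow> nat \<Rightarrow> real" where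
  "Yobs b0 tau xi dl N3 Z \<omega> i j g k =
     b0 + tau * Lg g + xi * Xi N3 i + dl * Lg g * Xi N3 i
     + Z (U3 i) \<omega> + Z (U2 i j) \<omega> + Z (Vg i g) \<omega> + Z (Eps i j g k) \<omega>"

definition Ybar :: "nat \<Rightarrow> (nat \<Rightarrow> nat \<Rightarrow> nat \<Rightarrow> nat \<Rightarrow> real) \<Rightarrow> nat \<Rightarrow> nat \<Rightarrow> nat \<Rightarrow> real" where
  "Ybar n Y i j g = (\<Sum>k<n. Y i j g k) / real n"

definition YbarT :: "nat \<Rightarrow> nat \<Rightarrow> nat \<Rightarrow> (nat \<Rightarrow> nat \<Rightarrow> nat \<Rightarrow> nat \<Rightarrow> real) \<Rightarrow> nat \<Rightarrow> real" where
  "YbarT N3 N2 n Y g = (\<Sum>i<N3. \<Sum>j<N2. \<Sum>k<n. Y i j g k) / (real N3 * real N2 * real n)"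

definition YbarC :: "nat \<Rightarrow> nat \<Rightarrow> nat \<Rightarrow> (nat \<Rightarrow> nat \<Rightarrow> nat \<Rightarrow> nat \<Rightarrow> real) \<Rightarrow> nat \<Rightarrow> real" where
  "YbarC N3 N2 n Y g = (\<Sum>i\<in>{N3..<2*N3}. \<Sum>j<N2. \<Sum>k<n. Y i j g k) / (real N3 * real N2 * real n)"

definition SS0 :: "nat \<Rightarrow> nat \<Rightarrow> nat \<Rightarrow> (nat \<Rightarrow> nat \<Rightarrow> nat \<Rightarrow> nat \<Rightarrow> real) \<Rightarrow> real" where
  "SS0 N3 N2 n Y = (\<Sum>i<2*N3. \<Sum>j<N2. \<Sum>g\<in>{1,2}. \<Sum>k<n. (Y i j g k - Ybar n Y i j g)\<^sup>2)"

definition SS1 :: "nat \<Rightarrow> nat \<Rightarrow> nat \<Rightarrow> (nat \<Rightarrow> nat \<Rightarrow> nat \<Rightarrow> nat \<Rightarrow> real) \<Rightarrow> real" where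
  "SS1 N3 N2 n Y = real n *
     ((\<Sum>i<N3. \<Sum>j<N2. ((Ybar n Y i j 1 - Ybar n Y i j 2)
                           - (YbarT N3 N2 n Y 1 - YbarT N3 N2 n Y 2))\<^sup>2)
    + (\<Sum>i\<in>{N3..<2*N3}. \<Sum>j<N2. ((Ybar n Y i j 1 - Ybar n Y i j 2)
                           - (YbarC N3 N2 n Y 1 - YbarC N3 N2 n Y 2))\<^sup>2))"

definition delta_hat :: "nat \<Rightarrow> nat \<Rightarrow> nat \<Rightarrow> (nat \<Rightarrow> nat \<Rightarrow> nat \<Rightarrow> nat \<Rightarrow> real) \<Rightarrow> real" where
  "delta_hat N3 N2 n Y = (YbarT N3 N2 n Y 1 - YbarC N3 N2 n Y 1) - (YbarT N3 N2 n Y 2 - YbarC N3 N2 n Y 2)"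

definition sigma_e_hat2 :: "nat \<Rightarrow> nat \<Rightarrow> nat \<Rightarrow> (nat \<Rightarrow> nat \<Rightarrow> nat \<Rightarrow> nat \<Rightarrow> real) \<Rightarrow> real" where
  "sigma_e_hat2 N3 N2 n Y = SS0 N3 N2 n Y / (4 * real N3 * real N2 * (real n - 1))"

definition sigma_grp_hat2 :: "nat \<Rightarrow> nat \<Rightarrow> nat \<Rightarrow> (nat \<Rightarrow> nat \<Rightarrow> nat \<Rightarrow> nat \<Rightarrow> real) \<Rightarrow> real" where
  "sigma_grp_hat2 N3 N2 n Y =
     (SS1 N3 N2 n Y / (4 * real N3 * real N2) - sigma_e_hat2 N3 N2 n Y) / real n"

definition var_hat :: "nat \<Rightarrow> nat \<Rightarrow> nat \<Rightarrow> (nat \<Rightarrow> nat \<Rightarrow> nat \<Rightarrow> nat \<Rightarrow> real) \<Rightarrow> real" where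
  "var_hat N3 N2 n Y = 4 / (real N3 * real N2 * real n) *
     (sigma_e_hat2 N3 N2 n Y + real n * real N2 * sigma_grp_hat2 N3 N2 n Y)"

definition T_stat :: "real \<Rightarrow> nat \<Rightarrow> nat \<Rightarrow> nat \<Rightarrow> (nat \<Rightarrow> nat \<Rightarrow> nat \<Rightarrow> nat \<Rightarrow> real) \<Rightarrow> real" where
  "T_stat dl N3 N2 n Y = (delta_hat N3 N2 n Y - dl) / sqrt (var_hat N3 N2 n Y)"

definition Phi :: "real \<Rightarrow> real" where
  "Phi x = measure (density lborel (\<lambda>t. ennreal (std_normal_density t))) {..x}"

end

theory Submission
  imports Defs
begin

(*
  The estimation error delta_hat - delta is a fixed linear combination of the independent centred
  normal group effects v and errors epsilon: within each level-three unit the effects u_i and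
  u_j(i) cancel from the difference of the two groups.  Hence (delta_hat - delta) / sqrt V is
  exactly standard normal for V = 4 (sigma_e^2 + n N2 sigma_grp^2) / (N3 N2 n), and it suffices
  to show var_hat / V --> 1 in probability.  Scaled by 1/(4 N3 N2 n), SS1 is a mean of squares
  of (centred group contrast + centred error contrast); by Cauchy-Schwarz it lies within
  2 sqrt (A B) + B of the group part A, where A --> sigma_grp^2 by Chebyshev (fourth moments of
  normals) and the error part B --> 0 by Markov.  The sigma_e_hat^2 contribution to var_hat / V
  is O(1/n) in mean.  A Slutsky argument, using that Phi is continuous, finishes the proof.
*)

section \<open>Normal and independent random variables\<close>

lemma (in prob_space) distributed_indep_normal_lincomb:
  assumes J: "finite J" "J \<noteq> {}" "inj_on \<iota> J" "\<iota> ` J \<subseteq> I"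
    and ind: "indep_vars (\<lambda>_. borel) X I"
    and D: "\<And>j. j \<in> J \<Longrightarrow> distributed M lborel (X (\<iota> j)) (\<lambda>x. ennreal (normal_density 0 (s j) x))"
    and s: "\<And>j. j \<in> J \<Longrightarrow> s j > 0" and w: "\<And>j. j \<in> J \<Longrightarrow> w j \<noteq> 0"
  shows "distributed M lborel (\<lambda>\<omega>. \<Sum>j\<in>J. w j * X (\<iota> j) \<omega>)
           (\<lambda>x. ennreal (normal_density 0 (sqrt (\<Sum>j\<in>J. (\<bar>w j\<bar> * s j)\<^sup>2)) x))"
proof -
  have "indep_vars (\<lambda>j. PiM {\<iota> j} (\<lambda>_. borel)) (\<lambda>j \<omega>. restrict (\<lambda>i. X i \<omega>) {\<iota> j}) J"
    using J by (intro indep_vars_restrict[OF ind]) (auto simp: disjoint_family_on_def inj_on_def)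
  then have "indep_vars (\<lambda>_. borel) (\<lambda>j \<omega>. w j * (restrict (\<lambda>i. X i \<omega>) {\<iota> j}) (\<iota> j)) J"
    by (rule indep_vars_compose2[where Y="\<lambda>j f. w j * f (\<iota> j)"]) measurable
  then have indep: "indep_vars (\<lambda>_. borel) (\<lambda>j \<omega>. w j * X (\<iota> j) \<omega>) J"
    by simp
  have "distributed M lborel (\<lambda>\<omega>. w j * X (\<iota> j) \<omega>) (\<lambda>x. ennreal (normal_density 0 (\<bar>w j\<bar> * s j) x))"
    if "j \<in> J" for j
    using normal_density_affine[OF D[OF that] s[OF that] w[OF that], of 0] by simp
  with sum_indep_normal[OF J(1,2) indep, of "\<lambda>j. \<bar>w j\<bar> * s j" "\<lambda>_. 0"] s w show ?thesis
    by simp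
qed

lemma (in prob_space) centred_normal_moments:
  assumes D: "distributed M lborel X (\<lambda>x. ennreal (normal_density 0 \<sigma> x))" and s: "\<sigma> > 0"
  shows "integrable M (\<lambda>\<omega>. X \<omega> ^ k)"
    and "expectation (\<lambda>\<omega>. (X \<omega>)\<^sup>2) = \<sigma>\<^sup>2"
    and "expectation (\<lambda>\<omega>. X \<omega> ^ 4) = 3 * \<sigma> ^ 4"
proof -
  show "integrable M (\<lambda>\<omega>. X \<omega> ^ k)"
    using distributed_integrable[OF D, of "\<lambda>x. x ^ k"] integrable_normal_moment[where \<mu>=0 and \<sigma>=\<sigma> and k=k] s
    by simp
  have "expectation (\<lambda>\<omega>. X \<omega> ^ (2*1)) = fact (2 * 1) / ((2 / \<sigma>\<^sup>2)^1 * fact 1)"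
    using distributed_integral[OF D, of "\<lambda>x. x ^ (2*1)"] integral_normal_moment_even[OF s, where k=1 and \<mu>=0]
    by simp
  then show "expectation (\<lambda>\<omega>. (X \<omega>)\<^sup>2) = \<sigma>\<^sup>2" by simp
  have "expectation (\<lambda>\<omega>. X \<omega> ^ (2*2)) = fact (2 * 2) / ((2 / \<sigma>\<^sup>2)^2 * fact 2)"
    using distributed_integral[OF D, of "\<lambda>x. x ^ (2*2)"] integral_normal_moment_even[OF s, where k=2 and \<mu>=0]
    by simp
  then show "expectation (\<lambda>\<omega>. X \<omega> ^ 4) = 3 * \<sigma> ^ 4"
    by (simp add: fact_numeral power2_eq_square field_simps power4_eq_xxxx)
qed

lemma (in prob_space) centred_normal_square_moments:
  assumes D: "distributed M lborel X (\<lambda>x. ennreal (normal_density 0 \<sigma> x))" and s: "\<sigma> > 0"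
  shows "integrable M (\<lambda>\<omega>. (X \<omega>)\<^sup>2 - \<sigma>\<^sup>2)"
    and "integrable M (\<lambda>\<omega>. ((X \<omega>)\<^sup>2 - \<sigma>\<^sup>2)\<^sup>2)"
    and "expectation (\<lambda>\<omega>. (X \<omega>)\<^sup>2 - \<sigma>\<^sup>2) = 0"
    and "expectation (\<lambda>\<omega>. ((X \<omega>)\<^sup>2 - \<sigma>\<^sup>2)\<^sup>2) = 2 * \<sigma> ^ 4"
proof -
  note m = centred_normal_moments[OF D s]
  have sq: "(\<lambda>\<omega>. ((X \<omega>)\<^sup>2 - \<sigma>\<^sup>2)\<^sup>2) = (\<lambda>\<omega>. X \<omega> ^ 4 - 2 * \<sigma>\<^sup>2 * (X \<omega>)\<^sup>2 + \<sigma> ^ 4)"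
    by (simp add: fun_eq_iff power2_eq_square power4_eq_xxxx algebra_simps)
  show "integrable M (\<lambda>\<omega>. (X \<omega>)\<^sup>2 - \<sigma>\<^sup>2)" using m(1) by simp
  show "integrable M (\<lambda>\<omega>. ((X \<omega>)\<^sup>2 - \<sigma>\<^sup>2)\<^sup>2)" unfolding sq using m(1) by simp
  show "expectation (\<lambda>\<omega>. (X \<omega>)\<^sup>2 - \<sigma>\<^sup>2) = 0" using m(1,2) prob_space by simp
  have "expectation (\<lambda>\<omega>. X \<omega> ^ 4 - 2 * \<sigma>\<^sup>2 * (X \<omega>)\<^sup>2 + \<sigma> ^ 4)
     = expectation (\<lambda>\<omega>. X \<omega> ^ 4) - 2 * \<sigma>\<^sup>2 * expectation (\<lambda>\<omega>. (X \<omega>)\<^sup>2) + \<sigma> ^ 4"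
    using m(1)[of 4] m(1)[of 2] prob_space by simp
  then show "expectation (\<lambda>\<omega>. ((X \<omega>)\<^sup>2 - \<sigma>\<^sup>2)\<^sup>2) = 2 * \<sigma> ^ 4"
    unfolding sq using m(2,3) by (simp add: power2_eq_square power4_eq_xxxx)
qed

lemma (in prob_space) expectation_square_sum_indep:
  fixes W :: "'i \<Rightarrow> 'a \<Rightarrow> real"
  assumes fin: "finite I" and ind: "indep_vars (\<lambda>_. borel) W I"
    and int: "\<And>i. i \<in> I \<Longrightarrow> integrable M (W i)" "\<And>i. i \<in> I \<Longrightarrow> integrable M (\<lambda>\<omega>. (W i \<omega>)\<^sup>2)"
    and centred: "\<And>i. i \<in> I \<Longrightarrow> expectation (W i) = 0"
  shows "integrable M (\<lambda>\<omega>. (\<Sum>i\<in>I. W i \<omega>)\<^sup>2)"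
    and "expectation (\<lambda>\<omega>. (\<Sum>i\<in>I. W i \<omega>)\<^sup>2) = (\<Sum>i\<in>I. expectation (\<lambda>\<omega>. (W i \<omega>)\<^sup>2))"
proof -
  have cross: "integrable M (\<lambda>\<omega>. W i \<omega> * W j \<omega>) \<and> expectation (\<lambda>\<omega>. W i \<omega> * W j \<omega>) = 0"
    if "i \<in> I" "j \<in> I" "i \<noteq> j" for i j
  proof -
    have "indep_var borel ((\<lambda>f. f i) \<circ> (\<lambda>\<omega>. restrict (\<lambda>i. W i \<omega>) {i}))
                    borel ((\<lambda>f. f j) \<circ> (\<lambda>\<omega>. restrict (\<lambda>i. W i \<omega>) {j}))"
      using that by (intro indep_var_compose[OF indep_var_restrict[OF ind]]) auto
    then have iv: "indep_var borel (W i) borel (W j)" by (simp add: comp_def)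
    show ?thesis
      using indep_var_lebesgue_integral[OF iv int(1)[OF that(1)] int(1)[OF that(2)]]
        indep_var_integrable[OF iv int(1)[OF that(1)] int(1)[OF that(2)]] centred that by simp
  qed
  have int_prod: "integrable M (\<lambda>\<omega>. W i \<omega> * W j \<omega>)" if "i \<in> I" "j \<in> I" for i j
    using cross[OF that] int(2)[OF that(1)] by (cases "i = j") (auto simp: power2_eq_square)
  have sq: "(\<lambda>\<omega>. (\<Sum>i\<in>I. W i \<omega>)\<^sup>2) = (\<lambda>\<omega>. \<Sum>i\<in>I. \<Sum>j\<in>I. W i \<omega> * W j \<omega>)"
    by (simp add: power2_eq_square sum_product)
  show "integrable M (\<lambda>\<omega>. (\<Sum>i\<in>I. W i \<omega>)\<^sup>2)"
    unfolding sq by (intro Bochner_Integration.integrable_sum int_prod)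
  have "expectation (\<lambda>\<omega>. (\<Sum>i\<in>I. W i \<omega>)\<^sup>2) = (\<Sum>i\<in>I. \<Sum>j\<in>I. expectation (\<lambda>\<omega>. W i \<omega> * W j \<omega>))"
    unfolding sq using int_prod by (simp add: Bochner_Integration.integral_sum integrable_sum)
  also have "\<dots> = (\<Sum>i\<in>I. expectation (\<lambda>\<omega>. W i \<omega> * W i \<omega>))"
  proof (intro sum.cong refl)
    fix i assume i: "i \<in> I"
    have "(\<Sum>j\<in>I. expectation (\<lambda>\<omega>. W i \<omega> * W j \<omega>)) = (\<Sum>j\<in>{i}. expectation (\<lambda>\<omega>. W i \<omega> * W j \<omega>))"
      using i fin cross[OF i] by (intro sum.mono_neutral_right) auto
    then show "(\<Sum>j\<in>I. expectation (\<lambda>\<omega>. W i \<omega> * W j \<omega>)) = expectation (\<lambda>\<omega>. W i \<omega> * W i \<omega>)" by simp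
  qed
  finally show "expectation (\<lambda>\<omega>. (\<Sum>i\<in>I. W i \<omega>)\<^sup>2) = (\<Sum>i\<in>I. expectation (\<lambda>\<omega>. (W i \<omega>)\<^sup>2))"
    by (simp add: power2_eq_square)
qed

lemma (in prob_space) expectation_double_sum:
  assumes "\<And>i j. i \<in> I \<Longrightarrow> j \<in> J \<Longrightarrow> integrable M (f i j)"
  shows "integrable M (\<lambda>\<omega>. \<Sum>i\<in>I. \<Sum>j\<in>J. f i j \<omega>)"
    and "expectation (\<lambda>\<omega>. \<Sum>i\<in>I. \<Sum>j\<in>J. f i j \<omega>) = (\<Sum>i\<in>I. \<Sum>j\<in>J. expectation (f i j))"
proof -
  have inner: "integrable M (\<lambda>\<omega>. \<Sum>j\<in>J. f i j \<omega>)" if "i \<in> I" for i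
    using assms that by (intro Bochner_Integration.integrable_sum)
  show "integrable M (\<lambda>\<omega>. \<Sum>i\<in>I. \<Sum>j\<in>J. f i j \<omega>)"
    by (rule Bochner_Integration.integrable_sum) (rule inner)
  have "expectation (\<lambda>\<omega>. \<Sum>i\<in>I. \<Sum>j\<in>J. f i j \<omega>) = (\<Sum>i\<in>I. expectation (\<lambda>\<omega>. \<Sum>j\<in>J. f i j \<omega>))"
    by (rule Bochner_Integration.integral_sum) (rule inner)
  also have "\<dots> = (\<Sum>i\<in>I. \<Sum>j\<in>J. expectation (f i j))"
    using assms by (intro sum.cong refl Bochner_Integration.integral_sum)
  finally show "expectation (\<lambda>\<omega>. \<Sum>i\<in>I. \<Sum>j\<in>J. f i j \<omega>) = (\<Sum>i\<in>I. \<Sum>j\<in>J. expectation (f i j))" .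
qed

lemma sum_sq_dev_mean_eq:
  fixes f :: "'i \<Rightarrow> real"
  assumes "finite S"
  shows "(\<Sum>x\<in>S. (f x - (\<Sum>y\<in>S. f y) / card S)\<^sup>2) = (\<Sum>x\<in>S. (f x)\<^sup>2) - card S * ((\<Sum>y\<in>S. f y) / card S)\<^sup>2"
proof (cases "S = {}")
  case False
  define m where "m = (\<Sum>y\<in>S. f y) / card S"
  have sum_m: "(\<Sum>y\<in>S. f y) = card S * m" using assms False by (simp add: m_def)
  have "(\<Sum>x\<in>S. (f x - m)\<^sup>2) = (\<Sum>x\<in>S. (f x)\<^sup>2 - 2 * m * f x + m\<^sup>2)"
    by (intro sum.cong) (auto simp: power2_eq_square algebra_simps)
  also have "\<dots> = (\<Sum>x\<in>S. (f x)\<^sup>2) - 2 * m * (\<Sum>x\<in>S. f x) + card S * m\<^sup>2"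
    by (simp add: sum.distrib sum_subtractf sum_distrib_left)
  also have "\<dots> = (\<Sum>x\<in>S. (f x)\<^sup>2) - card S * m\<^sup>2"
    by (simp add: sum_m power2_eq_square)
  finally show ?thesis by (simp add: m_def)
qed simp

lemma sum_sq_dev_mean_le:
  fixes f :: "'i \<Rightarrow> real"
  assumes "finite S"
  shows "(\<Sum>x\<in>S. (f x - (\<Sum>y\<in>S. f y) / card S)\<^sup>2) \<le> (\<Sum>x\<in>S. (f x)\<^sup>2)"
  unfolding sum_sq_dev_mean_eq[OF assms] by simp

lemma sum_sq_add_bounds:
  fixes p q :: "'i \<Rightarrow> real"
  assumes "finite S" "K > 0" "(\<Sum>x\<in>S. (q x)\<^sup>2) / K \<le> B"
  defines "A \<equiv> (\<Sum>x\<in>S. (p x)\<^sup>2) / K"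
  shows "A - 2 * sqrt (A * B) \<le> (\<Sum>x\<in>S. (p x + q x)\<^sup>2) / K"
    and "(\<Sum>x\<in>S. (p x + q x)\<^sup>2) / K \<le> A + 2 * sqrt (A * B) + B"
proof -
  define Q where "Q = (\<Sum>x\<in>S. (q x)\<^sup>2) / K"
  define C where "C = (\<Sum>x\<in>S. p x * q x) / K"
  have A0: "A \<ge> 0" and Q0: "Q \<ge> 0"
    using assms(2) unfolding A_def Q_def by (auto intro!: divide_nonneg_pos sum_nonneg)
  have expand: "(\<Sum>x\<in>S. (p x + q x)\<^sup>2) / K = A + 2 * C + Q"
    unfolding A_def C_def Q_def
    by (simp add: power2_eq_square algebra_simps sum.distrib sum_distrib_left add_divide_distrib)
  have "C\<^sup>2 \<le> A * Q"
    using Cauchy_Schwarz_ineq_sum[of p q S] assms(2)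
    by (simp add: A_def C_def Q_def power_divide power2_eq_square divide_right_mono)
  also have "\<dots> \<le> A * B" using assms(3) A0 unfolding Q_def by (rule mult_left_mono)
  finally have "\<bar>C\<bar> \<le> sqrt (A * B)" by (metis real_sqrt_abs real_sqrt_le_mono)
  then show "A - 2 * sqrt (A * B) \<le> (\<Sum>x\<in>S. (p x + q x)\<^sup>2) / K"
    and "(\<Sum>x\<in>S. (p x + q x)\<^sup>2) / K \<le> A + 2 * sqrt (A * B) + B"
    using expand Q0 assms(3) Q_def by auto
qed

section \<open>Convergence in probability along a filter\<close>

definition conv_in_prob :: "('p \<Rightarrow> 'a measure) \<Rightarrow> 'p filter \<Rightarrow> ('p \<Rightarrow> 'a \<Rightarrow> real) \<Rightarrow> real \<Rightarrow> bool" where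
  "conv_in_prob M F X c \<longleftrightarrow> (\<forall>\<^sub>F p in F. prob_space (M p) \<and> X p \<in> borel_measurable (M p)) \<and>
     (\<forall>e>0. ((\<lambda>p. measure (M p) {\<omega>\<in>space (M p). e \<le> \<bar>X p \<omega> - c\<bar>}) \<longlongrightarrow> 0) F)"

lemma conv_in_probD:
  "conv_in_prob M F X c \<Longrightarrow> e > 0 \<Longrightarrow> ((\<lambda>p. measure (M p) {\<omega>\<in>space (M p). e \<le> \<bar>X p \<omega> - c\<bar>}) \<longlongrightarrow> 0) F"
  by (simp add: conv_in_prob_def)

lemma conv_in_prob_eventually_measurable:
  "conv_in_prob M F X c \<Longrightarrow> \<forall>\<^sub>F p in F. prob_space (M p) \<and> X p \<in> borel_measurable (M p)"
  by (simp add: conv_in_prob_def)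

lemma conv_in_probI_bound:
  assumes "\<forall>\<^sub>F p in F. prob_space (M p) \<and> X p \<in> borel_measurable (M p)"
    and "\<And>e. e > 0 \<Longrightarrow> \<exists>h. (h \<longlongrightarrow> 0) F \<and>
                 (\<forall>\<^sub>F p in F. measure (M p) {\<omega>\<in>space (M p). e \<le> \<bar>X p \<omega> - c\<bar>} \<le> h p)"
  shows "conv_in_prob M F X c"
  unfolding conv_in_prob_def
proof (intro conjI allI impI assms(1))
  fix e :: real assume "e > 0"
  from assms(2)[OF this] obtain h where h: "(h \<longlongrightarrow> 0) F \<and>
      (\<forall>\<^sub>F p in F. measure (M p) {\<omega>\<in>space (M p). e \<le> \<bar>X p \<omega> - c\<bar>} \<le> h p)" ..
  show "((\<lambda>p. measure (M p) {\<omega>\<in>space (M p). e \<le> \<bar>X p \<omega> - c\<bar>}) \<longlongrightarrow> 0) F"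
    by (rule tendsto_sandwich[OF _ conjunct2[OF h] tendsto_const conjunct1[OF h]]) simp
qed

lemma (in prob_space) measure_le_measure_Un:
  "A \<subseteq> B \<union> C \<Longrightarrow> B \<in> sets M \<Longrightarrow> C \<in> sets M \<Longrightarrow> prob A \<le> prob B + prob C"
  using finite_measure_mono[of A "B \<union> C"] measure_Un_le[of B M C] by auto

lemma conv_in_prob_Chebyshev:
  assumes "\<forall>\<^sub>F p in F. prob_space (M p) \<and> X p \<in> borel_measurable (M p) \<and>
      integrable (M p) (\<lambda>\<omega>. (X p \<omega> - c)\<^sup>2) \<and> (\<integral>\<omega>. (X p \<omega> - c)\<^sup>2 \<partial>M p) \<le> h p"
    and "(h \<longlongrightarrow> 0) F"
  shows "conv_in_prob M F X c"
proof (rule conv_in_probI_bound)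
  show "\<forall>\<^sub>F p in F. prob_space (M p) \<and> X p \<in> borel_measurable (M p)"
    using assms(1) by (rule eventually_mono) auto
  fix e :: real assume e: "e > 0"
  show "\<exists>h. (h \<longlongrightarrow> 0) F \<and> (\<forall>\<^sub>F p in F. measure (M p) {\<omega>\<in>space (M p). e \<le> \<bar>X p \<omega> - c\<bar>} \<le> h p)"
  proof (intro exI conjI)
    show "((\<lambda>p. h p / e\<^sup>2) \<longlongrightarrow> 0) F" using tendsto_divide_zero[OF assms(2)] by simp
    show "\<forall>\<^sub>F p in F. measure (M p) {\<omega>\<in>space (M p). e \<le> \<bar>X p \<omega> - c\<bar>} \<le> h p / e\<^sup>2"
      using assms(1)
    proof (rule eventually_mono, elim conjE)
      fix p assume "integrable (M p) (\<lambda>\<omega>. (X p \<omega> - c)\<^sup>2)" and le: "(\<integral>\<omega>. (X p \<omega> - c)\<^sup>2 \<partial>M p) \<le> h p"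
      then have "measure (M p) {\<omega>\<in>space (M p). e\<^sup>2 \<le> (X p \<omega> - c)\<^sup>2} \<le> (\<integral>\<omega>. (X p \<omega> - c)\<^sup>2 \<partial>M p) / e\<^sup>2"
        using e by (intro integral_Markov_inequality_measure) auto
      also have "\<dots> \<le> h p / e\<^sup>2" using le by (simp add: divide_right_mono)
      finally show "measure (M p) {\<omega>\<in>space (M p). e \<le> \<bar>X p \<omega> - c\<bar>} \<le> h p / e\<^sup>2"
        using e by (simp add: abs_le_square_iff[symmetric])
    qed
  qed
qed

lemma conv_in_prob_Markov:
  assumes "\<forall>\<^sub>F p in F. prob_space (M p) \<and> X p \<in> borel_measurable (M p) \<and>
      integrable (M p) (X p) \<and> (\<forall>\<omega>\<in>space (M p). 0 \<le> X p \<omega>) \<and> (\<integral>\<omega>. X p \<omega> \<partial>M p) \<le> h p"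
    and "(h \<longlongrightarrow> 0) F"
  shows "conv_in_prob M F X 0"
proof (rule conv_in_probI_bound)
  show "\<forall>\<^sub>F p in F. prob_space (M p) \<and> X p \<in> borel_measurable (M p)"
    using assms(1) by (rule eventually_mono) auto
  fix e :: real assume e: "e > 0"
  show "\<exists>h. (h \<longlongrightarrow> 0) F \<and> (\<forall>\<^sub>F p in F. measure (M p) {\<omega>\<in>space (M p). e \<le> \<bar>X p \<omega> - 0\<bar>} \<le> h p)"
  proof (intro exI conjI)
    show "((\<lambda>p. h p / e) \<longlongrightarrow> 0) F" using tendsto_divide_zero[OF assms(2)] by simp
    show "\<forall>\<^sub>F p in F. measure (M p) {\<omega>\<in>space (M p). e \<le> \<bar>X p \<omega> - 0\<bar>} \<le> h p / e"
      using assms(1)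
    proof (rule eventually_mono, elim conjE)
      fix p assume "integrable (M p) (X p)" and nonneg: "\<forall>\<omega>\<in>space (M p). 0 \<le> X p \<omega>"
        and le: "(\<integral>\<omega>. X p \<omega> \<partial>M p) \<le> h p"
      then have "measure (M p) {\<omega>\<in>space (M p). e \<le> X p \<omega>} \<le> (\<integral>\<omega>. X p \<omega> \<partial>M p) / e"
        using e by (intro integral_Markov_inequality_measure) auto
      also have "\<dots> \<le> h p / e" using le e by (simp add: divide_right_mono)
      also have "{\<omega>\<in>space (M p). e \<le> X p \<omega>} = {\<omega>\<in>space (M p). e \<le> \<bar>X p \<omega> - 0\<bar>}"
        using nonneg by auto
      finally show "measure (M p) {\<omega>\<in>space (M p). e \<le> \<bar>X p \<omega> - 0\<bar>} \<le> h p / e" .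
    qed
  qed
qed

lemma conv_in_prob_const:
  assumes "\<forall>\<^sub>F p in F. prob_space (M p)" and "(f \<longlongrightarrow> c) F"
  shows "conv_in_prob M F (\<lambda>p \<omega>. f p) c"
proof (rule conv_in_probI_bound)
  show "\<forall>\<^sub>F p in F. prob_space (M p) \<and> (\<lambda>\<omega>. f p) \<in> borel_measurable (M p)"
    using assms(1) by (rule eventually_mono) auto
  fix e :: real assume "e > 0"
  show "\<exists>h. (h \<longlongrightarrow> 0) F \<and> (\<forall>\<^sub>F p in F. measure (M p) {\<omega>\<in>space (M p). e \<le> \<bar>f p - c\<bar>} \<le> h p)"
  proof (intro exI conjI)
    show "((\<lambda>_. 0) \<longlongrightarrow> 0) F" by simp
    from tendstoD[OF assms(2) \<open>e > 0\<close>]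
    show "\<forall>\<^sub>F p in F. measure (M p) {\<omega>\<in>space (M p). e \<le> \<bar>f p - c\<bar>} \<le> 0"
      by (rule eventually_mono) (auto simp: dist_real_def)
  qed
qed

lemma deviation_subset_continuous2:
  fixes X Y :: "'a \<Rightarrow> real"
  assumes "d > 0" and cont: "\<And>z. dist z (a, b) < d \<Longrightarrow> dist (g (fst z) (snd z)) (g a b) < e"
  shows "{\<omega>\<in>S. e \<le> \<bar>g (X \<omega>) (Y \<omega>) - g a b\<bar>} \<subseteq> {\<omega>\<in>S. d/2 \<le> \<bar>X \<omega> - a\<bar>} \<union> {\<omega>\<in>S. d/2 \<le> \<bar>Y \<omega> - b\<bar>}"
proof safe
  fix \<omega> assume \<omega>: "e \<le> \<bar>g (X \<omega>) (Y \<omega>) - g a b\<bar>" "\<not> d/2 \<le> \<bar>Y \<omega> - b\<bar>"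
  show "d/2 \<le> \<bar>X \<omega> - a\<bar>"
  proof (rule ccontr)
    assume "\<not> d/2 \<le> \<bar>X \<omega> - a\<bar>"
    moreover have "sqrt ((dist (X \<omega>) a)\<^sup>2 + (dist (Y \<omega>) b)\<^sup>2) \<le> dist (X \<omega>) a + dist (Y \<omega>) b"
      by (rule real_le_lsqrt) (simp_all add: power2_eq_square algebra_simps)
    ultimately have "dist (X \<omega>, Y \<omega>) (a, b) < d"
      using \<omega>(2) by (simp add: dist_Pair_Pair dist_real_def)
    with \<omega>(1) cont[of "(X \<omega>, Y \<omega>)"] show False by (simp add: dist_real_def)
  qed
qed

lemma conv_in_prob_continuous2:
  assumes X: "conv_in_prob M F X a" and Y: "conv_in_prob M F Y b"
    and g: "isCont (\<lambda>z. g (fst z) (snd z)) (a, b)"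
    and gm: "(\<lambda>z::real \<times> real. g (fst z) (snd z)) \<in> borel_measurable borel"
  shows "conv_in_prob M F (\<lambda>p \<omega>. g (X p \<omega>) (Y p \<omega>)) (g a b)"
proof (rule conv_in_probI_bound)
  note ev = conv_in_prob_eventually_measurable[OF X] conv_in_prob_eventually_measurable[OF Y]
  show "\<forall>\<^sub>F p in F. prob_space (M p) \<and> (\<lambda>\<omega>. g (X p \<omega>) (Y p \<omega>)) \<in> borel_measurable (M p)"
    using ev
  proof eventually_elim
    case (elim p)
    then have "(\<lambda>\<omega>. (X p \<omega>, Y p \<omega>)) \<in> borel_measurable (M p)"
      unfolding borel_prod[symmetric] by (intro measurable_Pair) auto
    from measurable_compose[OF this gm] elim show ?case by simp
  qed
  fix e :: real assume "e > 0"
  then obtain d where d: "d > 0" and dd: "\<And>z. dist z (a, b) < d \<Longrightarrow> dist (g (fst z) (snd z)) (g a b) < e"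
    using g unfolding continuous_at_eps_delta by fastforce
  show "\<exists>h. (h \<longlongrightarrow> 0) F \<and>
    (\<forall>\<^sub>F p in F. measure (M p) {\<omega>\<in>space (M p). e \<le> \<bar>g (X p \<omega>) (Y p \<omega>) - g a b\<bar>} \<le> h p)"
  proof (intro exI conjI)
    show "((\<lambda>p. measure (M p) {\<omega>\<in>space (M p). d/2 \<le> \<bar>X p \<omega> - a\<bar>}
        + measure (M p) {\<omega>\<in>space (M p). d/2 \<le> \<bar>Y p \<omega> - b\<bar>}) \<longlongrightarrow> 0) F"
      using tendsto_add[OF conv_in_probD[OF X, of "d/2"] conv_in_probD[OF Y, of "d/2"]] d by simp
    show "\<forall>\<^sub>F p in F. measure (M p) {\<omega>\<in>space (M p). e \<le> \<bar>g (X p \<omega>) (Y p \<omega>) - g a b\<bar>}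
       \<le> measure (M p) {\<omega>\<in>space (M p). d/2 \<le> \<bar>X p \<omega> - a\<bar>} + measure (M p) {\<omega>\<in>space (M p). d/2 \<le> \<bar>Y p \<omega> - b\<bar>}"
      using ev
    proof eventually_elim
      case (elim p)
      then have [measurable]: "X p \<in> borel_measurable (M p)" "Y p \<in> borel_measurable (M p)" by auto
      from elim deviation_subset_continuous2[OF d dd, of "space (M p)" "X p" "Y p"] show ?case
        by (intro prob_space.measure_le_measure_Un) auto
    qed
  qed
qed

lemma conv_in_prob_sandwich:
  assumes L: "conv_in_prob M F L c" and U: "conv_in_prob M F U c"
    and "\<forall>\<^sub>F p in F. X p \<in> borel_measurable (M p) \<and> (\<forall>\<omega>\<in>space (M p). L p \<omega> \<le> X p \<omega> \<and> X p \<omega> \<le> U p \<omega>)"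
  shows "conv_in_prob M F X c"
proof (rule conv_in_probI_bound)
  note ev = conv_in_prob_eventually_measurable[OF L] conv_in_prob_eventually_measurable[OF U] assms(3)
  show "\<forall>\<^sub>F p in F. prob_space (M p) \<and> X p \<in> borel_measurable (M p)"
    using ev by eventually_elim auto
  fix e :: real assume "e > 0"
  show "\<exists>h. (h \<longlongrightarrow> 0) F \<and> (\<forall>\<^sub>F p in F. measure (M p) {\<omega>\<in>space (M p). e \<le> \<bar>X p \<omega> - c\<bar>} \<le> h p)"
  proof (intro exI conjI)
    show "((\<lambda>p. measure (M p) {\<omega>\<in>space (M p). e \<le> \<bar>L p \<omega> - c\<bar>}
        + measure (M p) {\<omega>\<in>space (M p). e \<le> \<bar>U p \<omega> - c\<bar>}) \<longlongrightarrow> 0) F"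
      using tendsto_add[OF conv_in_probD[OF L \<open>e > 0\<close>] conv_in_probD[OF U \<open>e > 0\<close>]] by simp
    show "\<forall>\<^sub>F p in F. measure (M p) {\<omega>\<in>space (M p). e \<le> \<bar>X p \<omega> - c\<bar>}
       \<le> measure (M p) {\<omega>\<in>space (M p). e \<le> \<bar>L p \<omega> - c\<bar>} + measure (M p) {\<omega>\<in>space (M p). e \<le> \<bar>U p \<omega> - c\<bar>}"
      using ev
    proof eventually_elim
      case (elim p)
      then have [measurable]: "L p \<in> borel_measurable (M p)" "U p \<in> borel_measurable (M p)" by auto
      have "{\<omega>\<in>space (M p). e \<le> \<bar>X p \<omega> - c\<bar>}
        \<subseteq> {\<omega>\<in>space (M p). e \<le> \<bar>L p \<omega> - c\<bar>} \<union> {\<omega>\<in>space (M p). e \<le> \<bar>U p \<omega> - c\<bar>}"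
        using elim by fastforce
      with elim show ?case by (intro prob_space.measure_le_measure_Un) auto
    qed
  qed
qed

lemma conv_in_prob_dominated:
  assumes U: "conv_in_prob M F U 0"
    and "\<forall>\<^sub>F p in F. X p \<in> borel_measurable (M p) \<and> (\<forall>\<omega>\<in>space (M p). \<bar>X p \<omega>\<bar> \<le> U p \<omega>)"
  shows "conv_in_prob M F X 0"
proof (rule conv_in_probI_bound)
  note ev = conv_in_prob_eventually_measurable[OF U] assms(2)
  show "\<forall>\<^sub>F p in F. prob_space (M p) \<and> X p \<in> borel_measurable (M p)"
    using ev by eventually_elim auto
  fix e :: real assume "e > 0"
  show "\<exists>h. (h \<longlongrightarrow> 0) F \<and> (\<forall>\<^sub>F p in F. measure (M p) {\<omega>\<in>space (M p). e \<le> \<bar>X p \<omega> - 0\<bar>} \<le> h p)"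
  proof (intro exI conjI)
    show "((\<lambda>p. measure (M p) {\<omega>\<in>space (M p). e \<le> \<bar>U p \<omega> - 0\<bar>}) \<longlongrightarrow> 0) F"
      using conv_in_probD[OF U \<open>e > 0\<close>] .
    show "\<forall>\<^sub>F p in F. measure (M p) {\<omega>\<in>space (M p). e \<le> \<bar>X p \<omega> - 0\<bar>}
       \<le> measure (M p) {\<omega>\<in>space (M p). e \<le> \<bar>U p \<omega> - 0\<bar>}"
      using ev
    proof eventually_elim
      case (elim p)
      then have [measurable]: "U p \<in> borel_measurable (M p)" by auto
      have "{\<omega>\<in>space (M p). e \<le> \<bar>X p \<omega> - 0\<bar>} \<subseteq> {\<omega>\<in>space (M p). e \<le> \<bar>U p \<omega> - 0\<bar>}"
      proof safe
        fix \<omega> assume "\<omega> \<in> space (M p)" "e \<le> \<bar>X p \<omega> - 0\<bar>"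
        moreover from elim this(1) have "\<bar>X p \<omega>\<bar> \<le> U p \<omega>" by blast
        ultimately show "e \<le> \<bar>U p \<omega> - 0\<bar>" by linarith
      qed
      with elim show ?case by (intro finite_measure.finite_measure_mono prob_space.finite_measure) auto
    qed
  qed
qed

lemma conv_in_prob_cong:
  assumes X: "conv_in_prob M F X c"
    and "\<forall>\<^sub>F p in F. Y p \<in> borel_measurable (M p) \<and> (\<forall>\<omega>\<in>space (M p). Y p \<omega> = X p \<omega>)"
  shows "conv_in_prob M F Y c"
proof (rule conv_in_probI_bound)
  show "\<forall>\<^sub>F p in F. prob_space (M p) \<and> Y p \<in> borel_measurable (M p)"
    using conv_in_prob_eventually_measurable[OF X] assms(2) by eventually_elim auto
  fix e :: real assume "e > 0"
  show "\<exists>h. (h \<longlongrightarrow> 0) F \<and> (\<forall>\<^sub>F p in F. measure (M p) {\<omega>\<in>space (M p). e \<le> \<bar>Y p \<omega> - c\<bar>} \<le> h p)"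
  proof (intro exI conjI)
    show "((\<lambda>p. measure (M p) {\<omega>\<in>space (M p). e \<le> \<bar>X p \<omega> - c\<bar>}) \<longlongrightarrow> 0) F"
      using conv_in_probD[OF X \<open>e > 0\<close>] .
    show "\<forall>\<^sub>F p in F. measure (M p) {\<omega>\<in>space (M p). e \<le> \<bar>Y p \<omega> - c\<bar>}
       \<le> measure (M p) {\<omega>\<in>space (M p). e \<le> \<bar>X p \<omega> - c\<bar>}"
      using assms(2) by (rule eventually_mono) (simp cong: conj_cong)
  qed
qed

lemma abs_sqrt_minus_one_le:
  assumes "r \<ge> 0" shows "\<bar>sqrt r - 1\<bar> \<le> \<bar>r - 1\<bar>"
proof -
  have "r - 1 = (sqrt r - 1) * (sqrt r + 1)"
    using assms by (simp add: algebra_simps)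
  then have "\<bar>r - 1\<bar> = \<bar>sqrt r - 1\<bar> * (sqrt r + 1)"
    using assms by (simp add: abs_mult)
  also have "\<dots> \<ge> \<bar>sqrt r - 1\<bar>" using assms by (simp add: mult_le_cancel_left1)
  finally show ?thesis .
qed

lemma div_sqrt_le_perturb:
  fixes r w x \<epsilon> \<delta> :: real
  assumes r: "\<bar>r - 1\<bar> < \<epsilon>" and "\<epsilon> \<le> 1/2" and x: "\<bar>x\<bar> * \<epsilon> \<le> \<delta>"
  shows "0 < r" and "w / sqrt r \<le> x \<Longrightarrow> w \<le> x + \<delta>" and "w \<le> x - \<delta> \<Longrightarrow> w / sqrt r \<le> x"
proof -
  show r0: "0 < r" using assms by linarith
  have "\<bar>x * sqrt r - x\<bar> = \<bar>x\<bar> * \<bar>sqrt r - 1\<bar>" by (simp add: abs_mult[symmetric] algebra_simps)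
  also have "\<dots> \<le> \<bar>x\<bar> * \<bar>r - 1\<bar>" using abs_sqrt_minus_one_le r0 by (simp add: mult_left_mono)
  also have "\<dots> \<le> \<bar>x\<bar> * \<epsilon>" using r by (intro mult_left_mono) auto
  also have "\<dots> \<le> \<delta>" by (rule x)
  finally have near: "\<bar>x * sqrt r - x\<bar> \<le> \<delta>" .
  have iff: "w / sqrt r \<le> x \<longleftrightarrow> w \<le> x * sqrt r" using r0 by (simp add: divide_le_eq)
  show "w / sqrt r \<le> x \<Longrightarrow> w \<le> x + \<delta>" and "w \<le> x - \<delta> \<Longrightarrow> w / sqrt r \<le> x"
    using near unfolding iff by linarith+
qed

lemma (in prob_space) prob_div_sqrt_le_bounds:
  assumes [measurable]: "W \<in> borel_measurable M" "R \<in> borel_measurable M"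
    and "\<epsilon> \<le> 1/2" "\<bar>x\<bar> * \<epsilon> \<le> \<delta>"
  defines "E \<equiv> {\<omega>\<in>space M. 0 < R \<omega> \<and> W \<omega> / sqrt (R \<omega>) \<le> x}"
    and "G \<equiv> {\<omega>\<in>space M. \<epsilon> \<le> \<bar>R \<omega> - 1\<bar>}"
  shows "prob E \<le> prob {\<omega>\<in>space M. W \<omega> \<le> x + \<delta>} + prob G"
    and "prob {\<omega>\<in>space M. W \<omega> \<le> x - \<delta>} \<le> prob E + prob G"
proof -
  note perturb = div_sqrt_le_perturb[OF _ assms(3,4)]
  have "E \<subseteq> {\<omega>\<in>space M. W \<omega> \<le> x + \<delta>} \<union> G"
    unfolding E_def G_def using perturb(2) by (fastforce simp: not_le)
  then show "prob E \<le> prob {\<omega>\<in>space M. W \<omega> \<le> x + \<delta>} + prob G"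
    by (rule measure_le_measure_Un) (auto simp: G_def)
  have "{\<omega>\<in>space M. W \<omega> \<le> x - \<delta>} \<subseteq> E \<union> G"
    unfolding E_def G_def using perturb(1,3) by (fastforce simp: not_le)
  then show "prob {\<omega>\<in>space M. W \<omega> \<le> x - \<delta>} \<le> prob E + prob G"
    by (rule measure_le_measure_Un) (auto simp: E_def G_def)
qed

lemma isCont_Phi: "isCont Phi x"
proof -
  interpret real_distribution std_normal_distribution by (rule real_dist_normal_dist)
  have "emeasure std_normal_distribution {x} = 0"
    by (subst emeasure_density) (auto intro!: nn_integral_null_set)
  then have "isCont (cdf std_normal_distribution) x"
    by (simp add: isCont_cdf measure_def)
  moreover have "cdf std_normal_distribution = Phi"
    by (simp add: fun_eq_iff cdf_def Phi_def)
  ultimately show ?thesis by simp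
qed

lemma tendsto_prob_div_sqrt_Phi:
  assumes R: "conv_in_prob M F R 1"
    and W: "\<forall>\<^sub>F p in F. W p \<in> borel_measurable (M p) \<and> (\<forall>t. measure (M p) {\<omega>\<in>space (M p). W p \<omega> \<le> t} = Phi t)"
  shows "((\<lambda>p. measure (M p) {\<omega>\<in>space (M p). 0 < R p \<omega> \<and> W p \<omega> / sqrt (R p \<omega>) \<le> x}) \<longlongrightarrow> Phi x) F"
proof (rule tendstoI)
  fix e :: real assume "e > 0"
  then obtain d where d: "d > 0" and dd: "\<And>t. dist t x < d \<Longrightarrow> dist (Phi t) (Phi x) < e/2"
    using isCont_Phi[of x, unfolded continuous_at_eps_delta] half_gt_zero by blast
  define \<epsilon> where "\<epsilon> = min (1/2) (d / (2 * (\<bar>x\<bar> + 1)))"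
  have \<epsilon>: "\<epsilon> > 0" "\<epsilon> \<le> 1/2" using d by (simp_all add: \<epsilon>_def min_def)
  have "\<bar>x\<bar> * \<epsilon> \<le> \<bar>x\<bar> * (d / (2 * (\<bar>x\<bar> + 1)))" unfolding \<epsilon>_def by (intro mult_left_mono) auto
  also have "\<dots> \<le> d/2" using d by (simp add: field_simps)
  finally have x\<epsilon>: "\<bar>x\<bar> * \<epsilon> \<le> d/2" .
  have Phi_near: "\<bar>Phi (x + d/2) - Phi x\<bar> < e/2" "\<bar>Phi (x - d/2) - Phi x\<bar> < e/2"
    using dd[of "x + d/2"] dd[of "x - d/2"] d by (simp_all add: dist_real_def)
  have small: "\<forall>\<^sub>F p in F. measure (M p) {\<omega>\<in>space (M p). \<epsilon> \<le> \<bar>R p \<omega> - 1\<bar>} < e/2"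
    using tendstoD[OF conv_in_probD[OF R \<epsilon>(1)], of "e/2"] \<open>e > 0\<close> by (simp add: dist_real_def)
  show "\<forall>\<^sub>F p in F. dist (measure (M p) {\<omega>\<in>space (M p). 0 < R p \<omega> \<and> W p \<omega> / sqrt (R p \<omega>) \<le> x}) (Phi x) < e"
    using small W conv_in_prob_eventually_measurable[OF R]
  proof eventually_elim
    case (elim p)
    then interpret prob_space "M p" by simp
    note bounds = prob_div_sqrt_le_bounds[of "W p" "R p" \<epsilon> x "d/2"]
    show ?case
      using elim bounds \<epsilon>(2) x\<epsilon> Phi_near measure_nonneg[of "M p"]
      by (simp add: dist_real_def abs_less_iff) (smt (verit))
  qed
qed

lemma eventually_sizes:
  fixes a b c :: nat
  assumes "\<And>N3 N2 n. N3 \<ge> a \<Longrightarrow> N2 \<ge> b \<Longrightarrow> n \<ge> c \<Longrightarrow> P (N3, N2, n)"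
  shows "eventually P (at_top \<times>\<^sub>F at_top \<times>\<^sub>F at_top)"
  using eventually_prodI[OF eventually_ge_at_top[of a]
                           eventually_prodI[OF eventually_ge_at_top[of b] eventually_ge_at_top[of c]]]
  by (rule eventually_mono) (auto intro: assms)

lemma tendsto_const_div_at_top:
  assumes "filterlim f at_top F"
  shows "((\<lambda>p. c / real (f p)) \<longlongrightarrow> 0) F"
  using filterlim_compose[OF filterlim_real_sequentially assms]
  by (intro tendsto_divide_0[OF tendsto_const] filterlim_at_top_imp_at_infinity)

lemma filterlim_sizes:
  shows "filterlim fst at_top (at_top \<times>\<^sub>F at_top \<times>\<^sub>F at_top :: (nat \<times> nat \<times> nat) filter)"
    and "filterlim (\<lambda>p. snd (snd p)) at_top (at_top \<times>\<^sub>F at_top \<times>\<^sub>F at_top :: (nat \<times> nat \<times> nat) filter)"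
    and "filterlim (\<lambda>p. snd (snd p) * fst (snd p)) at_top (at_top \<times>\<^sub>F at_top \<times>\<^sub>F at_top :: (nat \<times> nat \<times> nat) filter)"
proof -
  show "filterlim fst at_top (at_top \<times>\<^sub>F at_top \<times>\<^sub>F at_top :: (nat \<times> nat \<times> nat) filter)"
    by (rule filterlim_fst)
  show n: "filterlim (\<lambda>p. snd (snd p)) at_top (at_top \<times>\<^sub>F at_top \<times>\<^sub>F at_top :: (nat \<times> nat \<times> nat) filter)"
    by (rule filterlim_compose[OF filterlim_snd filterlim_snd])
  show "filterlim (\<lambda>p. snd (snd p) * fst (snd p)) at_top (at_top \<times>\<^sub>F at_top \<times>\<^sub>F at_top :: (nat \<times> nat \<times> nat) filter)"
    by (rule filterlim_at_top_mono[OF n eventually_sizes[of 0 1 0]]) simp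
qed

section \<open>The estimators in terms of the random effects\<close>

definition grp_contrast :: "(eff \<Rightarrow> 'a \<Rightarrow> real) \<Rightarrow> nat \<Rightarrow> 'a \<Rightarrow> real" where
  "grp_contrast Z i \<omega> = Z (Vg i 1) \<omega> - Z (Vg i 2) \<omega>"

definition err_mean :: "nat \<Rightarrow> (eff \<Rightarrow> 'a \<Rightarrow> real) \<Rightarrow> nat \<Rightarrow> nat \<Rightarrow> nat \<Rightarrow> 'a \<Rightarrow> real" where
  "err_mean n Z i j g \<omega> = (\<Sum>k<n. Z (Eps i j g k) \<omega>) / real n"

definition err_contrast :: "nat \<Rightarrow> (eff \<Rightarrow> 'a \<Rightarrow> real) \<Rightarrow> nat \<Rightarrow> nat \<Rightarrow> 'a \<Rightarrow> real" where
  "err_contrast n Z i j \<omega> = err_mean n Z i j 1 \<omega> - err_mean n Z i j 2 \<omega>"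

definition grp_contrast_mean :: "nat set \<Rightarrow> (eff \<Rightarrow> 'a \<Rightarrow> real) \<Rightarrow> 'a \<Rightarrow> real" where
  "grp_contrast_mean I Z \<omega> = (\<Sum>i\<in>I. grp_contrast Z i \<omega>) / card I"

definition err_contrast_mean :: "nat set \<Rightarrow> nat \<Rightarrow> nat \<Rightarrow> (eff \<Rightarrow> 'a \<Rightarrow> real) \<Rightarrow> 'a \<Rightarrow> real" where
  "err_contrast_mean I N2 n Z \<omega> = (\<Sum>i\<in>I. \<Sum>j<N2. err_contrast n Z i j \<omega>) / (card I * real N2)"

definition arm :: "nat \<Rightarrow> nat \<Rightarrow> nat set" where
  "arm N3 i = (if i < N3 then {..<N3} else {N3..<2*N3})"

text \<open>Each of the \<open>2 * N3\<close> group contrasts has variance \<open>2 * sg\<^sup>2\<close>, so this estimates \<open>sg\<^sup>2\<close>.\<close>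
definition grp_contrast_msq :: "nat \<Rightarrow> (eff \<Rightarrow> 'a \<Rightarrow> real) \<Rightarrow> 'a \<Rightarrow> real" where
  "grp_contrast_msq N3 Z \<omega> = (\<Sum>i<2*N3. (grp_contrast Z i \<omega>)\<^sup>2) / (4 * real N3)"

definition grp_ss :: "nat \<Rightarrow> (eff \<Rightarrow> 'a \<Rightarrow> real) \<Rightarrow> 'a \<Rightarrow> real" where
  "grp_ss N3 Z \<omega> = (\<Sum>i<2*N3. (grp_contrast Z i \<omega> - grp_contrast_mean (arm N3 i) Z \<omega>)\<^sup>2) / (4 * real N3)"

definition err_contrast_msq :: "nat \<Rightarrow> nat \<Rightarrow> nat \<Rightarrow> (eff \<Rightarrow> 'a \<Rightarrow> real) \<Rightarrow> 'a \<Rightarrow> real" where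
  "err_contrast_msq N3 N2 n Z \<omega> = (\<Sum>i<2*N3. \<Sum>j<N2. (err_contrast n Z i j \<omega>)\<^sup>2) / (4 * real N3 * real N2)"

definition err_msq :: "nat \<Rightarrow> nat \<Rightarrow> nat \<Rightarrow> (eff \<Rightarrow> 'a \<Rightarrow> real) \<Rightarrow> 'a \<Rightarrow> real" where
  "err_msq N3 N2 n Z \<omega> =
     (\<Sum>i<2*N3. \<Sum>j<N2. \<Sum>g\<in>{1,2}. \<Sum>k<n. (Z (Eps i j g k) \<omega>)\<^sup>2) / (4 * real N3 * real N2 * (real n - 1))"

definition contrast_sign :: "nat \<Rightarrow> real" where
  "contrast_sign g = (if g = 1 then 1 else -1)"

definition arm_sign :: "nat \<Rightarrow> nat \<Rightarrow> real" where
  "arm_sign N3 i = (if i < N3 then 1 else -1)"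

definition delta_hat_noise :: "nat \<Rightarrow> nat \<Rightarrow> nat \<Rightarrow> (eff \<Rightarrow> 'a \<Rightarrow> real) \<Rightarrow> 'a \<Rightarrow> real" where
  "delta_hat_noise N3 N2 n Z \<omega> =
     (\<Sum>i<2*N3. arm_sign N3 i * grp_contrast Z i \<omega>) / real N3
     + (\<Sum>i<2*N3. \<Sum>j<N2. arm_sign N3 i * err_contrast n Z i j \<omega>) / (real N3 * real N2)"

definition delta_hat_var :: "nat \<Rightarrow> nat \<Rightarrow> nat \<Rightarrow> real \<Rightarrow> real \<Rightarrow> real" where
  "delta_hat_var N3 N2 n sg se = 4 / (real N3 * real N2 * real n) * (se\<^sup>2 + real n * real N2 * sg\<^sup>2)"

lemma sum_lessThan_double:
  "(\<Sum>i<2*N. f i) = (\<Sum>i<N. f i) + (\<Sum>i\<in>{N..<2*N::nat}. f i :: real)"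
proof -
  have "{..<2*N} = {..<N} \<union> {N..<2*N}" by auto
  then show ?thesis by (simp add: sum.union_disjoint ivl_disj_int)
qed

lemma sum_lessThan_double_arm:
  "(\<Sum>i<2*N3. f (arm N3 i) i) = (\<Sum>i<N3. f {..<N3} i) + (\<Sum>i\<in>{N3..<2*N3}. f {N3..<2*N3} i :: real)"
  unfolding sum_lessThan_double by (intro arg_cong2[where f="(+)"] sum.cong) (auto simp: arm_def)

lemma sum_arm_sign:
  "(\<Sum>i<2*N3. arm_sign N3 i * f i) = (\<Sum>i<N3. f i) - (\<Sum>i\<in>{N3..<2*N3}. f i :: real)"
  unfolding sum_lessThan_double by (simp add: arm_sign_def sum_negf[symmetric])

lemma grp_contrast_lincomb: "grp_contrast Z i \<omega> = (\<Sum>g\<in>{1,2}. contrast_sign g * Z (Vg i g) \<omega>)"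
  by (simp add: grp_contrast_def contrast_sign_def)

lemma err_contrast_lincomb:
  "err_contrast n Z i j \<omega> = (\<Sum>g\<in>{1,2}. \<Sum>k<n. contrast_sign g / real n * Z (Eps i j g k) \<omega>)"
  by (simp add: err_contrast_def err_mean_def contrast_sign_def sum_divide_distrib sum_negf diff_divide_distrib)

lemma grp_ss_eq:
  assumes "N3 > 0"
  shows "grp_ss N3 Z \<omega> = grp_contrast_msq N3 Z \<omega>
           - ((grp_contrast_mean {..<N3} Z \<omega>)\<^sup>2 + (grp_contrast_mean {N3..<2*N3} Z \<omega>)\<^sup>2) / 4"
proof -
  have dev: "(\<Sum>i\<in>I. (grp_contrast Z i \<omega> - grp_contrast_mean I Z \<omega>)\<^sup>2)
      = (\<Sum>i\<in>I. (grp_contrast Z i \<omega>)\<^sup>2) - N3 * (grp_contrast_mean I Z \<omega>)\<^sup>2"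
    if "finite I" "card I = N3" for I
    using sum_sq_dev_mean_eq[OF that(1), of "\<lambda>i. grp_contrast Z i \<omega>"] that
    by (simp add: grp_contrast_mean_def)
  show ?thesis
    unfolding grp_ss_def grp_contrast_msq_def sum_lessThan_double_arm[where f="\<lambda>I i. (grp_contrast Z i \<omega> - grp_contrast_mean I Z \<omega>)\<^sup>2"]
      sum_lessThan_double[where f="\<lambda>i. (grp_contrast Z i \<omega>)\<^sup>2"] dev[OF finite_lessThan card_lessThan]
    using assms by (simp add: dev field_simps)
qed

lemma err_contrast_centred_sum_sq_le:
  "(\<Sum>i<2*N3. \<Sum>j<N2. (err_contrast n Z i j \<omega> - err_contrast_mean (arm N3 i) N2 n Z \<omega>)\<^sup>2)
     \<le> (\<Sum>i<2*N3. \<Sum>j<N2. (err_contrast n Z i j \<omega>)\<^sup>2)"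
proof -
  have arm_dev: "(\<Sum>i\<in>I. \<Sum>j<N2. (err_contrast n Z i j \<omega> - err_contrast_mean I N2 n Z \<omega>)\<^sup>2)
      \<le> (\<Sum>i\<in>I. \<Sum>j<N2. (err_contrast n Z i j \<omega>)\<^sup>2)" if "finite I" for I
    using sum_sq_dev_mean_le[of "I \<times> {..<N2}" "\<lambda>x. err_contrast n Z (fst x) (snd x) \<omega>"] that
    by (simp add: err_contrast_mean_def sum.cartesian_product' card_cartesian_product)
  have "(\<Sum>i<2*N3. \<Sum>j<N2. (err_contrast n Z i j \<omega> - err_contrast_mean (arm N3 i) N2 n Z \<omega>)\<^sup>2)
      = (\<Sum>i<N3. \<Sum>j<N2. (err_contrast n Z i j \<omega> - err_contrast_mean {..<N3} N2 n Z \<omega>)\<^sup>2)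
      + (\<Sum>i\<in>{N3..<2*N3}. \<Sum>j<N2. (err_contrast n Z i j \<omega> - err_contrast_mean {N3..<2*N3} N2 n Z \<omega>)\<^sup>2)"
    by (rule sum_lessThan_double_arm)
  also have "\<dots> \<le> (\<Sum>i<N3. \<Sum>j<N2. (err_contrast n Z i j \<omega>)\<^sup>2)
      + (\<Sum>i\<in>{N3..<2*N3}. \<Sum>j<N2. (err_contrast n Z i j \<omega>)\<^sup>2)"
    by (intro add_mono arm_dev) simp_all
  also have "\<dots> = (\<Sum>i<2*N3. \<Sum>j<N2. (err_contrast n Z i j \<omega>)\<^sup>2)"
    by (rule sum_lessThan_double[symmetric])
  finally show ?thesis .
qed

lemma var_hat_ratio_eq:
  assumes "N3 > 0" "N2 > 0" "n > 0" "sg > 0"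
  shows "var_hat N3 N2 n Y / delta_hat_var N3 N2 n sg se =
     (sigma_e_hat2 N3 N2 n Y * (1 - real N2) / (real n * real N2) + SS1 N3 N2 n Y / (4 * real N3 * real N2 * real n))
     / (se\<^sup>2 / (real n * real N2) + sg\<^sup>2)"
proof -
  define c where "c = 4 / (real N3 * real N2 * real n)"
  define u where "u = sigma_e_hat2 N3 N2 n Y * (1 - real N2) + SS1 N3 N2 n Y / (4 * real N3)"
  have c: "c > 0" using assms by (simp add: c_def)
  have "var_hat N3 N2 n Y = c * u"
    using assms unfolding var_hat_def sigma_grp_hat2_def c_def u_def by (simp add: field_simps)
  then have "var_hat N3 N2 n Y / delta_hat_var N3 N2 n sg se = u / (se\<^sup>2 + real n * real N2 * sg\<^sup>2)"
    using c by (simp add: delta_hat_var_def c_def[symmetric])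
  also have "\<dots> = (u / (real n * real N2)) / ((se\<^sup>2 + real n * real N2 * sg\<^sup>2) / (real n * real N2))"
    using assms by simp
  finally show ?thesis
    using assms by (simp add: u_def add_divide_distrib)
qed

context
  fixes b0 tau xi dl :: real and N3 N2 n :: nat and Z :: "eff \<Rightarrow> 'a \<Rightarrow> real" and \<omega> :: 'a
  assumes pos: "N3 > 0" "N2 > 0" "n > 0"
begin

lemma Ybar_Yobs: "Ybar n (Yobs b0 tau xi dl N3 Z \<omega>) i j g = b0 + tau * Lg g + xi * Xi N3 i + dl * Lg g * Xi N3 i
   + Z (U3 i) \<omega> + Z (U2 i j) \<omega> + Z (Vg i g) \<omega> + err_mean n Z i j g \<omega>"
  using pos by (simp add: Ybar_def Yobs_def err_mean_def sum.distrib add_divide_distrib)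

lemma Ybar_group_diff:
  "Ybar n (Yobs b0 tau xi dl N3 Z \<omega>) i j 1 - Ybar n (Yobs b0 tau xi dl N3 Z \<omega>) i j 2
     = tau + dl * Xi N3 i + grp_contrast Z i \<omega> + err_contrast n Z i j \<omega>"
  by (simp add: Ybar_Yobs Lg_def grp_contrast_def err_contrast_def)

lemma arm_mean_group_diff:
  assumes "finite I" "I \<noteq> {}" "\<And>i. i \<in> I \<Longrightarrow> Xi N3 i = x"
  shows "(\<Sum>i\<in>I. \<Sum>j<N2. \<Sum>k<n. Yobs b0 tau xi dl N3 Z \<omega> i j 1 k - Yobs b0 tau xi dl N3 Z \<omega> i j 2 k) / (card I * real N2 * real n)
    = tau + dl * x + grp_contrast_mean I Z \<omega> + err_contrast_mean I N2 n Z \<omega>"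
proof -
  have "(\<Sum>i\<in>I. \<Sum>j<N2. \<Sum>k<n. Yobs b0 tau xi dl N3 Z \<omega> i j 1 k - Yobs b0 tau xi dl N3 Z \<omega> i j 2 k) / (card I * real N2 * real n)
      = (\<Sum>i\<in>I. \<Sum>j<N2. Ybar n (Yobs b0 tau xi dl N3 Z \<omega>) i j 1 - Ybar n (Yobs b0 tau xi dl N3 Z \<omega>) i j 2) / (card I * real N2)"
    using pos by (simp add: Ybar_def sum_subtractf diff_divide_distrib sum_divide_distrib[symmetric] mult_ac)
  also have "\<dots> = (\<Sum>i\<in>I. \<Sum>j<N2. (tau + dl * x) + grp_contrast Z i \<omega> + err_contrast n Z i j \<omega>) / (card I * real N2)"
    using assms(3) by (intro arg_cong2[where f="(/)"] sum.cong refl) (simp only: Ybar_group_diff)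
  also have "\<dots> = tau + dl * x + grp_contrast_mean I Z \<omega> + err_contrast_mean I N2 n Z \<omega>"
    using pos assms(1,2)
    by (simp add: sum.distrib grp_contrast_mean_def err_contrast_mean_def sum_distrib_left[symmetric] field_simps)
  finally show ?thesis .
qed

lemma YbarT_group_diff:
  "YbarT N3 N2 n (Yobs b0 tau xi dl N3 Z \<omega>) 1 - YbarT N3 N2 n (Yobs b0 tau xi dl N3 Z \<omega>) 2
     = tau + dl + grp_contrast_mean {..<N3} Z \<omega> + err_contrast_mean {..<N3} N2 n Z \<omega>"
  using arm_mean_group_diff[of "{..<N3}" 1] pos
  by (simp add: YbarT_def Xi_def diff_divide_distrib sum_subtractf lessThan_empty_iff)

lemma YbarC_group_diff:
  "YbarC N3 N2 n (Yobs b0 tau xi dl N3 Z \<omega>) 1 - YbarC N3 N2 n (Yobs b0 tau xi dl N3 Z \<omega>) 2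
     = tau + grp_contrast_mean {N3..<2*N3} Z \<omega> + err_contrast_mean {N3..<2*N3} N2 n Z \<omega>"
  using arm_mean_group_diff[of "{N3..<2*N3}" 0] pos
  by (simp add: YbarC_def Xi_def diff_divide_distrib sum_subtractf)

lemma delta_hat_error: "delta_hat N3 N2 n (Yobs b0 tau xi dl N3 Z \<omega>) - dl = delta_hat_noise N3 N2 n Z \<omega>"
  using YbarT_group_diff YbarC_group_diff pos
  by (simp add: delta_hat_def delta_hat_noise_def sum_arm_sign grp_contrast_mean_def err_contrast_mean_def
      diff_divide_distrib sum_distrib_left[symmetric] sum_subtractf)

lemma SS1_Yobs: "SS1 N3 N2 n (Yobs b0 tau xi dl N3 Z \<omega>) = real n *
   (\<Sum>i<2*N3. \<Sum>j<N2. ((grp_contrast Z i \<omega> - grp_contrast_mean (arm N3 i) Z \<omega>)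
                       + (err_contrast n Z i j \<omega> - err_contrast_mean (arm N3 i) N2 n Z \<omega>))\<^sup>2)"
proof -
  define dev where "dev I i j = (grp_contrast Z i \<omega> - grp_contrast_mean I Z \<omega>)
    + (err_contrast n Z i j \<omega> - err_contrast_mean I N2 n Z \<omega>)" for I i j
  have "SS1 N3 N2 n (Yobs b0 tau xi dl N3 Z \<omega>) = real n *
     ((\<Sum>i<N3. \<Sum>j<N2. (dev {..<N3} i j)\<^sup>2) + (\<Sum>i\<in>{N3..<2*N3}. \<Sum>j<N2. (dev {N3..<2*N3} i j)\<^sup>2))"
    unfolding SS1_def YbarT_group_diff YbarC_group_diff
    by (intro arg_cong2[where f="(*)"] refl arg_cong2[where f="(+)"] sum.cong)
       (auto simp: Ybar_group_diff[simplified] Xi_def dev_def algebra_simps)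
  also have "\<dots> = real n * (\<Sum>i<2*N3. \<Sum>j<N2. (dev (arm N3 i) i j)\<^sup>2)"
    by (simp only: sum_lessThan_double_arm[where f="\<lambda>I i. \<Sum>j<N2. (dev I i j)\<^sup>2"])
  finally show ?thesis by (simp only: dev_def)
qed

lemma SS1_scaled_bounds:
  defines "S \<equiv> SS1 N3 N2 n (Yobs b0 tau xi dl N3 Z \<omega>) / (4 * real N3 * real N2 * real n)"
    and "A \<equiv> grp_ss N3 Z \<omega>" and "B \<equiv> err_contrast_msq N3 N2 n Z \<omega>"
  shows "A - 2 * sqrt (A * B) \<le> S" and "S \<le> A + 2 * sqrt (A * B) + B"
proof -
  define K where "K = 4 * real N3 * real N2"
  have K: "K > 0" using pos by (simp add: K_def)
  define p where "p x = grp_contrast Z (fst x) \<omega> - grp_contrast_mean (arm N3 (fst x)) Z \<omega>" for x :: "nat \<times> nat"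
  define q where "q x = err_contrast n Z (fst x) (snd x) \<omega> - err_contrast_mean (arm N3 (fst x)) N2 n Z \<omega>"
    for x :: "nat \<times> nat"
  have S: "S = (\<Sum>x\<in>{..<2*N3} \<times> {..<N2}. (p x + q x)\<^sup>2) / K"
    using pos by (simp add: S_def K_def SS1_Yobs p_def q_def sum.cartesian_product case_prod_beta)
  have A: "A = (\<Sum>x\<in>{..<2*N3} \<times> {..<N2}. (p x)\<^sup>2) / K"
    using pos by (simp add: A_def K_def grp_ss_def p_def sum.cartesian_product' sum_distrib_left[symmetric])
  have "(\<Sum>x\<in>{..<2*N3} \<times> {..<N2}. (q x)\<^sup>2) \<le> (\<Sum>i<2*N3. \<Sum>j<N2. (err_contrast n Z i j \<omega>)\<^sup>2)"
    using err_contrast_centred_sum_sq_le by (simp add: q_def sum.cartesian_product')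
  then have "(\<Sum>x\<in>{..<2*N3} \<times> {..<N2}. (q x)\<^sup>2) / K \<le> B"
    using K by (simp add: B_def K_def err_contrast_msq_def divide_right_mono)
  from sum_sq_add_bounds[OF _ K this, of p] show "A - 2 * sqrt (A * B) \<le> S" and "S \<le> A + 2 * sqrt (A * B) + B"
    unfolding A[symmetric] S[symmetric] by simp_all
qed

lemma SS0_Yobs:
  "SS0 N3 N2 n (Yobs b0 tau xi dl N3 Z \<omega>) = (\<Sum>i<2*N3. \<Sum>j<N2. \<Sum>g\<in>{1,2}. \<Sum>k<n. (Z (Eps i j g k) \<omega> - err_mean n Z i j g \<omega>)\<^sup>2)"
  unfolding SS0_def by (intro sum.cong refl) (simp add: Ybar_Yobs Yobs_def)

lemma sigma_e_hat2_bounds: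
  assumes "n \<ge> 2"
  shows "0 \<le> sigma_e_hat2 N3 N2 n (Yobs b0 tau xi dl N3 Z \<omega>)"
    and "sigma_e_hat2 N3 N2 n (Yobs b0 tau xi dl N3 Z \<omega>) \<le> err_msq N3 N2 n Z \<omega>"
proof -
  have "(\<Sum>k<n. (Z (Eps i j g k) \<omega> - err_mean n Z i j g \<omega>)\<^sup>2) \<le> (\<Sum>k<n. (Z (Eps i j g k) \<omega>)\<^sup>2)" for i j g
    using sum_sq_dev_mean_le[of "{..<n}" "\<lambda>k. Z (Eps i j g k) \<omega>"] by (simp add: err_mean_def)
  then have "SS0 N3 N2 n (Yobs b0 tau xi dl N3 Z \<omega>) \<le> (\<Sum>i<2*N3. \<Sum>j<N2. \<Sum>g\<in>{1,2}. \<Sum>k<n. (Z (Eps i j g k) \<omega>)\<^sup>2)"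
    unfolding SS0_Yobs by (intro sum_mono[OF sum_mono[OF sum_mono]])
  moreover have "0 \<le> SS0 N3 N2 n (Yobs b0 tau xi dl N3 Z \<omega>)" unfolding SS0_def by (intro sum_nonneg) auto
  moreover have "4 * real N3 * real N2 * (real n - 1) > 0" using pos assms by simp
  ultimately show "0 \<le> sigma_e_hat2 N3 N2 n (Yobs b0 tau xi dl N3 Z \<omega>)"
    and "sigma_e_hat2 N3 N2 n (Yobs b0 tau xi dl N3 Z \<omega>) \<le> err_msq N3 N2 n Z \<omega>"
    unfolding sigma_e_hat2_def err_msq_def by (simp_all add: divide_right_mono)
qed

end

section \<open>Distributions for fixed sample sizes\<close>

lemma mem_effects [simp]:
  "U3 i \<in> effects N3 N2 n \<longleftrightarrow> i < 2*N3"
  "U2 i j \<in> effects N3 N2 n \<longleftrightarrow> i < 2*N3 \<and> j < N2"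
  "Vg i g \<in> effects N3 N2 n \<longleftrightarrow> i < 2*N3 \<and> g \<in> {1,2}"
  "Eps i j g k \<in> effects N3 N2 n \<longleftrightarrow> i < 2*N3 \<and> j < N2 \<and> g \<in> {1,2} \<and> k < n"
  unfolding effects_def by blast+

locale three_level_model =
  fixes M :: "'a measure" and N3 N2 n :: nat and s3 s2 sg se :: real and Z :: "eff \<Rightarrow> 'a \<Rightarrow> real"
  assumes model: "model_effects M N3 N2 n s3 s2 sg se Z"
    and N3: "N3 \<ge> 1" and N2: "N2 \<ge> 1" and n: "n \<ge> 2"
    and sd_pos: "s3 > 0" "s2 > 0" "sg > 0" "se > 0"
begin

lemma prob_space_model: "prob_space M"
  using model by (simp add: model_effects_def)

sublocale prob_space M
  by (rule prob_space_model)

lemma Z_distributed: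
  "e \<in> effects N3 N2 n \<Longrightarrow>
     distributed M lborel (Z e) (\<lambda>x. ennreal (normal_density 0 (eff_sd s3 s2 sg se e) x))"
  using model by (simp add: model_effects_def)

lemma Z_measurable [measurable]: "e \<in> effects N3 N2 n \<Longrightarrow> Z e \<in> borel_measurable M"
  using distributed_measurable[OF Z_distributed] by simp

lemma sizes_pos: "N3 > 0" "N2 > 0" "n > 0"
  using N3 N2 n by auto

lemma eff_sd_pos: "eff_sd s3 s2 sg se e > 0"
  using sd_pos by (cases e) auto

lemma distributed_effects_lincomb:
  assumes "finite J" "J \<noteq> {}" "inj_on \<iota> J" "\<iota> ` J \<subseteq> effects N3 N2 n" "\<And>j. j \<in> J \<Longrightarrow> w j \<noteq> 0"
    and "\<And>\<omega>. f \<omega> = (\<Sum>j\<in>J. w j * Z (\<iota> j) \<omega>)"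
    and "v = (\<Sum>j\<in>J. (\<bar>w j\<bar> * eff_sd s3 s2 sg se (\<iota> j))\<^sup>2)"
  shows "distributed M lborel f (\<lambda>x. ennreal (normal_density 0 (sqrt v) x))"
proof -
  have "indep_vars (\<lambda>_. borel) Z (effects N3 N2 n)"
    using model by (simp add: model_effects_def)
  moreover have "f = (\<lambda>\<omega>. \<Sum>j\<in>J. w j * Z (\<iota> j) \<omega>)" using assms(6) by auto
  ultimately show ?thesis
    using distributed_indep_normal_lincomb[OF assms(1-4), of Z "\<lambda>j. eff_sd s3 s2 sg se (\<iota> j)" w]
      assms(4,5,7) eff_sd_pos
    by (auto intro!: Z_distributed)
qed

lemma grp_contrast_mean_distributed:
  assumes "I \<subseteq> {..<2*N3}" "I \<noteq> {}"
  shows "distributed M lborel (grp_contrast_mean I Z)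
           (\<lambda>x. ennreal (normal_density 0 (sqrt (2 * sg\<^sup>2 / card I)) x))"
proof (rule distributed_effects_lincomb[where J="I \<times> {1,2}" and \<iota>="\<lambda>(i, g). Vg i g"
      and w="\<lambda>(i, g). contrast_sign g / card I"])
  have fin: "finite I" using assms(1) finite_subset by blast
  then show "finite (I \<times> {1::nat, 2})" by simp
  show "I \<times> {1::nat, 2} \<noteq> {}" "inj_on (\<lambda>(i, g). Vg i g) (I \<times> {1, 2})"
    "(\<lambda>(i, g). Vg i g) ` (I \<times> {1, 2}) \<subseteq> effects N3 N2 n"
    using assms by (auto simp: inj_on_def)
  show "\<And>j. j \<in> I \<times> {1, 2} \<Longrightarrow> (\<lambda>(i, g). contrast_sign g / card I) j \<noteq> 0"
    using fin assms(2) by (auto simp: contrast_sign_def)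
  show "grp_contrast_mean I Z \<omega> = (\<Sum>j\<in>I \<times> {1, 2}. (\<lambda>(i, g). contrast_sign g / card I) j * Z ((\<lambda>(i, g). Vg i g) j) \<omega>)" for \<omega>
    by (simp add: grp_contrast_mean_def grp_contrast_lincomb sum.cartesian_product' sum_divide_distrib add_divide_distrib)
  have "(\<Sum>j\<in>I \<times> {1::nat, 2}. (\<bar>(\<lambda>(i, g). contrast_sign g / card I) j\<bar> * eff_sd s3 s2 sg se ((\<lambda>(i, g). Vg i g) j))\<^sup>2)
     = (\<Sum>j\<in>I \<times> {1::nat, 2}. (sg / card I)\<^sup>2)"
    by (intro sum.cong) (auto simp: contrast_sign_def)
  also have "\<dots> = 2 * sg\<^sup>2 / card I" using fin assms(2) by (simp add: card_cartesian_product power2_eq_square)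
  finally show "2 * sg\<^sup>2 / card I = (\<Sum>j\<in>I \<times> {1, 2}. (\<bar>(\<lambda>(i, g). contrast_sign g / card I) j\<bar> * eff_sd s3 s2 sg se ((\<lambda>(i, g). Vg i g) j))\<^sup>2)"
    by simp
qed

lemma grp_contrast_distributed:
  assumes "i < 2*N3"
  shows "distributed M lborel (grp_contrast Z i) (\<lambda>x. ennreal (normal_density 0 (sqrt (2 * sg\<^sup>2)) x))"
  using grp_contrast_mean_distributed[of "{i}"] assms by (simp add: grp_contrast_mean_def[abs_def])

lemma err_contrast_distributed:
  assumes "i < 2*N3" "j < N2"
  shows "distributed M lborel (err_contrast n Z i j) (\<lambda>x. ennreal (normal_density 0 (sqrt (2 * se\<^sup>2 / n)) x))"
proof (rule distributed_effects_lincomb[where J="{1,2} \<times> {..<n}" and \<iota>="\<lambda>(g, k). Eps i j g k"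
      and w="\<lambda>(g, k). contrast_sign g / n"])
  show "finite ({1::nat, 2} \<times> {..<n})" by simp
  show "{1::nat, 2} \<times> {..<n} \<noteq> {}" "inj_on (\<lambda>(g, k). Eps i j g k) ({1, 2} \<times> {..<n})"
    "(\<lambda>(g, k). Eps i j g k) ` ({1, 2} \<times> {..<n}) \<subseteq> effects N3 N2 n"
    using assms n by (auto simp: inj_on_def lessThan_empty_iff)
  show "\<And>z. z \<in> {1, 2} \<times> {..<n} \<Longrightarrow> (\<lambda>(g, k). contrast_sign g / n) z \<noteq> 0"
    using n by (auto simp: contrast_sign_def)
  show "err_contrast n Z i j \<omega> = (\<Sum>z\<in>{1, 2} \<times> {..<n}. (\<lambda>(g, k). contrast_sign g / n) z * Z ((\<lambda>(g, k). Eps i j g k) z) \<omega>)" for \<omega>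
    by (simp add: err_contrast_lincomb sum.cartesian_product')
  have "(\<Sum>z\<in>{1::nat, 2} \<times> {..<n}. (\<bar>(\<lambda>(g, k). contrast_sign g / n) z\<bar> * eff_sd s3 s2 sg se ((\<lambda>(g, k). Eps i j g k) z))\<^sup>2)
     = (\<Sum>z\<in>{1::nat, 2} \<times> {..<n}. (se / n)\<^sup>2)"
    by (intro sum.cong) (auto simp: contrast_sign_def)
  also have "\<dots> = 2 * se\<^sup>2 / n" using n by (simp add: power2_eq_square)
  finally show "2 * se\<^sup>2 / n = (\<Sum>z\<in>{1, 2} \<times> {..<n}. (\<bar>(\<lambda>(g, k). contrast_sign g / n) z\<bar> * eff_sd s3 s2 sg se ((\<lambda>(g, k). Eps i j g k) z))\<^sup>2)"
    by simp
qed

lemma delta_hat_var_pos: "delta_hat_var N3 N2 n sg se > 0"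
  using N3 N2 n sd_pos unfolding delta_hat_var_def by (intro mult_pos_pos add_pos_pos) auto

lemma delta_hat_noise_distributed:
  "distributed M lborel (delta_hat_noise N3 N2 n Z)
     (\<lambda>x. ennreal (normal_density 0 (sqrt (delta_hat_var N3 N2 n sg se)) x))"
proof -
  define A :: "(nat \<times> nat) set" where "A = {..<2*N3} \<times> {1, 2}"
  define B :: "(nat \<times> nat \<times> nat \<times> nat) set" where "B = {..<2*N3} \<times> {..<N2} \<times> {1, 2} \<times> {..<n}"
  define \<iota> where "\<iota> = case_sum (\<lambda>(i, g). Vg i g) (\<lambda>(i, j, g, k). Eps i j g k)"
  define w :: "nat \<times> nat + nat \<times> nat \<times> nat \<times> nat \<Rightarrow> real" where
    "w = case_sum (\<lambda>(i, g). arm_sign N3 i * contrast_sign g / N3)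
                  (\<lambda>(i, j, g, k). arm_sign N3 i * contrast_sign g / (N3 * N2 * n))"
  have fin: "finite A" "finite B" by (simp_all add: A_def B_def)
  have unit_sign: "\<bar>arm_sign N3 i * contrast_sign g\<bar> = 1" for i g
    by (simp add: arm_sign_def contrast_sign_def)
  show ?thesis
  proof (rule distributed_effects_lincomb[where J="A <+> B" and \<iota>=\<iota> and w=w])
    show "finite (A <+> B)" using fin by simp
    show "A <+> B \<noteq> {}" using N3 by (auto simp: A_def lessThan_empty_iff)
    show "inj_on \<iota> (A <+> B)" by (auto simp: inj_on_def \<iota>_def)
    show "\<iota> ` (A <+> B) \<subseteq> effects N3 N2 n" by (auto simp: \<iota>_def A_def B_def)
    show "w j \<noteq> 0" if "j \<in> A <+> B" for j
      using that N3 N2 n by (auto simp: w_def arm_sign_def contrast_sign_def split: if_splits)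
    show "delta_hat_noise N3 N2 n Z \<omega> = (\<Sum>j\<in>A <+> B. w j * Z (\<iota> j) \<omega>)" for \<omega>
      unfolding sum.Plus[OF fin]
      using N3 N2 n
      by (simp add: A_def B_def w_def \<iota>_def delta_hat_noise_def grp_contrast_lincomb err_contrast_lincomb
          sum.cartesian_product' sum_distrib_left sum_divide_distrib distrib_left add_divide_distrib mult_ac)
    have "(\<Sum>j\<in>A <+> B. (\<bar>w j\<bar> * eff_sd s3 s2 sg se (\<iota> j))\<^sup>2)
       = (\<Sum>z\<in>A. (sg / N3)\<^sup>2) + (\<Sum>z\<in>B. (se / (real N3 * real N2 * real n))\<^sup>2)"
      unfolding sum.Plus[OF fin]
      using N3 N2 n sd_pos
      by (intro arg_cong2[where f="(+)"] sum.cong refl)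
         (auto simp: A_def B_def w_def \<iota>_def abs_divide abs_mult[symmetric] unit_sign)
    also have "\<dots> = delta_hat_var N3 N2 n sg se"
      using N3 N2 n by (simp add: A_def B_def delta_hat_var_def card_cartesian_product power2_eq_square field_simps)
    finally show "delta_hat_var N3 N2 n sg se = (\<Sum>j\<in>A <+> B. (\<bar>w j\<bar> * eff_sd s3 s2 sg se (\<iota> j))\<^sup>2)"
      by simp
  qed
qed

lemma grp_contrast_measurable: "i < 2*N3 \<Longrightarrow> grp_contrast Z i \<in> borel_measurable M"
  using distributed_measurable[OF grp_contrast_distributed] by simp

lemma grp_contrast_mean_measurable:
  "I \<subseteq> {..<2*N3} \<Longrightarrow> I \<noteq> {} \<Longrightarrow> grp_contrast_mean I Z \<in> borel_measurable M"
  using distributed_measurable[OF grp_contrast_mean_distributed] by simp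

lemma err_contrast_measurable: "i < 2*N3 \<Longrightarrow> j < N2 \<Longrightarrow> err_contrast n Z i j \<in> borel_measurable M"
  using distributed_measurable[OF err_contrast_distributed] by simp

lemma err_mean_measurable: "i < 2*N3 \<Longrightarrow> j < N2 \<Longrightarrow> g \<in> {1,2} \<Longrightarrow> err_mean n Z i j g \<in> borel_measurable M"
  unfolding err_mean_def[abs_def] by (intro borel_measurable_divide borel_measurable_sum Z_measurable) auto

lemma err_contrast_mean_measurable:
  "I \<subseteq> {..<2*N3} \<Longrightarrow> err_contrast_mean I N2 n Z \<in> borel_measurable M"
  unfolding err_contrast_mean_def[abs_def]
  by (intro borel_measurable_divide borel_measurable_sum err_contrast_measurable) auto

lemma arm_subset: "arm N3 i \<subseteq> {..<2*N3}" and arm_nonempty: "arm N3 i \<noteq> {}"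
  using N3 by (auto simp: arm_def lessThan_empty_iff)

lemma grp_ss_measurable: "grp_ss N3 Z \<in> borel_measurable M"
  unfolding grp_ss_def[abs_def]
  by (intro borel_measurable_divide borel_measurable_sum borel_measurable_power borel_measurable_diff
      grp_contrast_measurable grp_contrast_mean_measurable arm_subset arm_nonempty) auto

lemma err_contrast_msq_measurable: "err_contrast_msq N3 N2 n Z \<in> borel_measurable M"
  unfolding err_contrast_msq_def[abs_def]
  by (intro borel_measurable_divide borel_measurable_sum borel_measurable_power err_contrast_measurable) auto

lemma err_msq_measurable: "err_msq N3 N2 n Z \<in> borel_measurable M"
  unfolding err_msq_def[abs_def]
  by (intro borel_measurable_divide borel_measurable_sum borel_measurable_power Z_measurable) auto

lemma grp_contrast_msq_measurable: "grp_contrast_msq N3 Z \<in> borel_measurable M"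
  unfolding grp_contrast_msq_def[abs_def]
  by (intro borel_measurable_divide borel_measurable_sum borel_measurable_power grp_contrast_measurable) auto

lemma sigma_e_hat2_measurable:
  "(\<lambda>\<omega>. sigma_e_hat2 N3 N2 n (Yobs b0 tau xi dl N3 Z \<omega>)) \<in> borel_measurable M"
  unfolding sigma_e_hat2_def SS0_Yobs[OF sizes_pos]
  by (intro borel_measurable_divide borel_measurable_sum borel_measurable_power borel_measurable_diff
      Z_measurable err_mean_measurable) auto

lemma SS1_measurable:
  "(\<lambda>\<omega>. SS1 N3 N2 n (Yobs b0 tau xi dl N3 Z \<omega>)) \<in> borel_measurable M"
  unfolding SS1_Yobs[OF sizes_pos]
  by (intro borel_measurable_times borel_measurable_const borel_measurable_sum borel_measurable_power
      borel_measurable_add borel_measurable_diff grp_contrast_measurable grp_contrast_mean_measurable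
      err_contrast_measurable err_contrast_mean_measurable arm_subset arm_nonempty) auto

lemma delta_hat_noise_measurable: "delta_hat_noise N3 N2 n Z \<in> borel_measurable M"
  using distributed_measurable[OF delta_hat_noise_distributed] by simp

lemma grp_contrast_mean_sq_moments:
  assumes "I \<subseteq> {..<2*N3}" "I \<noteq> {}"
  shows "integrable M (\<lambda>\<omega>. (grp_contrast_mean I Z \<omega>)\<^sup>2)"
    and "expectation (\<lambda>\<omega>. (grp_contrast_mean I Z \<omega>)\<^sup>2) = 2 * sg\<^sup>2 / card I"
proof -
  have "card I > 0" using assms finite_subset by fastforce
  then have "sqrt (2 * sg\<^sup>2 / card I) > 0" using sd_pos by simp
  note moments = centred_normal_moments[OF grp_contrast_mean_distributed[OF assms] this]
  show "integrable M (\<lambda>\<omega>. (grp_contrast_mean I Z \<omega>)\<^sup>2)" by (rule moments(1))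
  show "expectation (\<lambda>\<omega>. (grp_contrast_mean I Z \<omega>)\<^sup>2) = 2 * sg\<^sup>2 / card I"
    using moments(2) by simp
qed

lemma err_contrast_msq_moments:
  shows "integrable M (err_contrast_msq N3 N2 n Z)"
    and "expectation (err_contrast_msq N3 N2 n Z) = se\<^sup>2 / n"
proof -
  have "sqrt (2 * se\<^sup>2 / n) > 0" using sd_pos n by simp
  note moments = centred_normal_moments[OF err_contrast_distributed this]
  note sums = expectation_double_sum[of "{..<2*N3}" "{..<N2}" "\<lambda>i j \<omega>. (err_contrast n Z i j \<omega>)\<^sup>2"]
  show "integrable M (err_contrast_msq N3 N2 n Z)"
    unfolding err_contrast_msq_def[abs_def] using sums(1) moments(1) by simp
  have "expectation (err_contrast_msq N3 N2 n Z) = (\<Sum>i<2*N3. \<Sum>j<N2. 2 * se\<^sup>2 / n) / (4 * real N3 * real N2)"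
    unfolding err_contrast_msq_def[abs_def] using sums(2) moments(1,2) by simp
  also have "\<dots> = se\<^sup>2 / n" using sizes_pos by (simp add: field_simps)
  finally show "expectation (err_contrast_msq N3 N2 n Z) = se\<^sup>2 / n" .
qed

lemma err_msq_moments:
  shows "integrable M (err_msq N3 N2 n Z)"
    and "expectation (err_msq N3 N2 n Z) = real n * se\<^sup>2 / (real n - 1)"
proof -
  note moments = centred_normal_moments[OF Z_distributed eff_sd_pos]
  have cell: "integrable M (\<lambda>\<omega>. \<Sum>g\<in>{1::nat,2}. \<Sum>k<n. (Z (Eps i j g k) \<omega>)\<^sup>2)"
    "expectation (\<lambda>\<omega>. \<Sum>g\<in>{1::nat,2}. \<Sum>k<n. (Z (Eps i j g k) \<omega>)\<^sup>2) = 2 * n * se\<^sup>2"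
    if "i < 2*N3" "j < N2" for i j
    using expectation_double_sum[of "{1::nat,2}" "{..<n}" "\<lambda>g k \<omega>. (Z (Eps i j g k) \<omega>)\<^sup>2"] moments(1,2) that
    by simp_all
  note sums = expectation_double_sum[of "{..<2*N3}" "{..<N2}" "\<lambda>i j \<omega>. \<Sum>g\<in>{1::nat,2}. \<Sum>k<n. (Z (Eps i j g k) \<omega>)\<^sup>2"]
  show "integrable M (err_msq N3 N2 n Z)"
    unfolding err_msq_def[abs_def] using sums(1) cell(1) by simp
  have "expectation (err_msq N3 N2 n Z) = (\<Sum>i<2*N3. \<Sum>j<N2. 2 * n * se\<^sup>2) / (4 * real N3 * real N2 * (real n - 1))"
    unfolding err_msq_def[abs_def] using sums(2) cell by simp
  also have "\<dots> = real n * se\<^sup>2 / (real n - 1)" using sizes_pos n by (simp add: field_simps)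
  finally show "expectation (err_msq N3 N2 n Z) = real n * se\<^sup>2 / (real n - 1)" .
qed

lemma grp_contrast_indep: "indep_vars (\<lambda>_. borel) (grp_contrast Z) {..<2*N3}"
proof -
  have "indep_vars (\<lambda>_. borel) Z (effects N3 N2 n)"
    using model by (simp add: model_effects_def)
  then have "indep_vars (\<lambda>i. PiM {Vg i 1, Vg i 2} (\<lambda>_. borel))
      (\<lambda>i \<omega>. restrict (\<lambda>e. Z e \<omega>) {Vg i 1, Vg i 2}) {..<2*N3}"
    by (rule indep_vars_restrict) (auto simp: disjoint_family_on_def)
  then have "indep_vars (\<lambda>_. borel) (\<lambda>i \<omega>. (restrict (\<lambda>e. Z e \<omega>) {Vg i 1, Vg i 2}) (Vg i 1)
      - (restrict (\<lambda>e. Z e \<omega>) {Vg i 1, Vg i 2}) (Vg i 2)) {..<2*N3}"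
    by (rule indep_vars_compose2[where Y="\<lambda>i f. f (Vg i 1) - f (Vg i 2)"]) measurable
  then show ?thesis by (simp add: grp_contrast_def[abs_def])
qed

text \<open>The summands \<open>(grp_contrast Z i)\<^sup>2 - 2 * sg\<^sup>2\<close> are independent and centred,
  each with variance \<open>8 * sg ^ 4\<close>.\<close>
lemma grp_contrast_msq_variance:
  shows "integrable M (\<lambda>\<omega>. (grp_contrast_msq N3 Z \<omega> - sg\<^sup>2)\<^sup>2)"
    and "expectation (\<lambda>\<omega>. (grp_contrast_msq N3 Z \<omega> - sg\<^sup>2)\<^sup>2) = sg ^ 4 / N3"
proof -
  define W where "W i \<omega> = (grp_contrast Z i \<omega>)\<^sup>2 - (sqrt (2 * sg\<^sup>2))\<^sup>2" for i \<omega>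
  have "sqrt (2 * sg\<^sup>2) > 0" using sd_pos by simp
  note m = centred_normal_square_moments[OF grp_contrast_distributed this]
  have indep: "indep_vars (\<lambda>_. borel) W {..<2*N3}"
    unfolding W_def by (rule indep_vars_compose2[OF grp_contrast_indep, where Y="\<lambda>_ x. x\<^sup>2 - _"]) measurable
  note S = expectation_square_sum_indep[OF _ indep, simplified, unfolded W_def, OF m(1) m(2) m(3)]
  have centre: "grp_contrast_msq N3 Z \<omega> - sg\<^sup>2 = (\<Sum>i<2*N3. W i \<omega>) / (4 * real N3)" for \<omega>
    using sizes_pos by (simp add: grp_contrast_msq_def W_def sum_subtractf field_simps)
  show "integrable M (\<lambda>\<omega>. (grp_contrast_msq N3 Z \<omega> - sg\<^sup>2)\<^sup>2)"
    unfolding centre power_divide using S(1) by (simp add: W_def)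
  have "expectation (\<lambda>\<omega>. (grp_contrast_msq N3 Z \<omega> - sg\<^sup>2)\<^sup>2) = (\<Sum>i<2*N3. 2 * (sqrt (2 * sg\<^sup>2)) ^ 4) / (4 * real N3)\<^sup>2"
    unfolding centre power_divide using S(2) m(4) by (simp add: W_def)
  also have "\<dots> = sg ^ 4 / N3" using sizes_pos by (simp add: power2_eq_square power4_eq_xxxx field_simps)
  finally show "expectation (\<lambda>\<omega>. (grp_contrast_msq N3 Z \<omega> - sg\<^sup>2)\<^sup>2) = sg ^ 4 / N3" .
qed

lemma std_normal_noise_measurable:
  "(\<lambda>\<omega>. delta_hat_noise N3 N2 n Z \<omega> / sqrt (delta_hat_var N3 N2 n sg se)) \<in> borel_measurable M"
  using delta_hat_noise_measurable by measurable

lemma prob_std_normal_noise_le: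
  "prob {\<omega>\<in>space M. delta_hat_noise N3 N2 n Z \<omega> / sqrt (delta_hat_var N3 N2 n sg se) \<le> t} = Phi t"
proof -
  define s where "s = sqrt (delta_hat_var N3 N2 n sg se)"
  have s: "s > 0" using delta_hat_var_pos by (simp add: s_def)
  have "distributed M lborel (\<lambda>\<omega>. 0 + (1 / s) * delta_hat_noise N3 N2 n Z \<omega>)
      (\<lambda>x. ennreal (normal_density (0 + (1 / s) * 0) (\<bar>1 / s\<bar> * s) x))"
    using s by (intro normal_density_affine) (simp_all add: s_def delta_hat_noise_distributed)
  then have std: "distributed M lborel (\<lambda>\<omega>. delta_hat_noise N3 N2 n Z \<omega> / s) (\<lambda>x. ennreal (std_normal_density x))"
    using s by simp
  have "prob {\<omega>\<in>space M. delta_hat_noise N3 N2 n Z \<omega> / s \<le> t}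
      = measure (distr M lborel (\<lambda>\<omega>. delta_hat_noise N3 N2 n Z \<omega> / s)) {..t}"
    using distributed_measurable[OF std] by (subst measure_distr) (auto simp: vimage_def Int_def conj_commute)
  also have "\<dots> = Phi t"
    unfolding distributed_distr_eq_density[OF std] Phi_def ..
  finally show ?thesis by (simp add: s_def)
qed

lemma T_stat_event_eq:
  fixes b0 tau xi dl :: real
  defines "R \<equiv> \<lambda>\<omega>. var_hat N3 N2 n (Yobs b0 tau xi dl N3 Z \<omega>) / delta_hat_var N3 N2 n sg se"
    and "W \<equiv> \<lambda>\<omega>. delta_hat_noise N3 N2 n Z \<omega> / sqrt (delta_hat_var N3 N2 n sg se)"
  shows "{\<omega> \<in> space M. var_hat N3 N2 n (Yobs b0 tau xi dl N3 Z \<omega>) > 0 \<and>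
                     T_stat dl N3 N2 n (Yobs b0 tau xi dl N3 Z \<omega>) \<le> x}
       = {\<omega> \<in> space M. 0 < R \<omega> \<and> W \<omega> / sqrt (R \<omega>) \<le> x}"
proof -
  have V: "delta_hat_var N3 N2 n sg se > 0" by (rule delta_hat_var_pos)
  have vh: "var_hat N3 N2 n (Yobs b0 tau xi dl N3 Z \<omega>) = delta_hat_var N3 N2 n sg se * R \<omega>" for \<omega>
    using V by (simp add: R_def)
  have T: "T_stat dl N3 N2 n (Yobs b0 tau xi dl N3 Z \<omega>) = W \<omega> / sqrt (R \<omega>)" for \<omega>
    unfolding T_stat_def delta_hat_error[OF sizes_pos] vh W_def
    by (simp add: real_sqrt_mult divide_divide_eq_left mult.commute)
  show ?thesis using V by (auto simp: vh T zero_less_mult_iff)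
qed

end

section \<open>Asymptotics\<close>

locale three_level_family =
  fixes M :: "nat \<Rightarrow> nat \<Rightarrow> nat \<Rightarrow> 'a measure" and s3 s2 sg se :: real
    and Z :: "nat \<Rightarrow> nat \<Rightarrow> nat \<Rightarrow> eff \<Rightarrow> 'a \<Rightarrow> real"
  assumes sd_pos: "s3 > 0" "s2 > 0" "sg > 0" "se > 0"
    and model: "\<And>N3 N2 n. N3 \<ge> 1 \<Longrightarrow> N2 \<ge> 1 \<Longrightarrow> n \<ge> 2 \<Longrightarrow>
                  model_effects (M N3 N2 n) N3 N2 n s3 s2 sg se (Z N3 N2 n)"
begin

abbreviation Ms :: "nat \<times> nat \<times> nat \<Rightarrow> 'a measure" where
  "Ms \<equiv> \<lambda>(N3, N2, n). M N3 N2 n"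

abbreviation sizes :: "(nat \<times> nat \<times> nat) filter" where
  "sizes \<equiv> at_top \<times>\<^sub>F at_top \<times>\<^sub>F at_top"

lemma eventually_model:
  assumes "\<And>N3 N2 n. three_level_model (M N3 N2 n) N3 N2 n s3 s2 sg se (Z N3 N2 n) \<Longrightarrow> P (N3, N2, n)"
  shows "eventually P sizes"
  by (rule eventually_sizes[of 1 1 2]) (intro assms, simp add: three_level_model_def model sd_pos)

lemma conv_grp_contrast_msq:
  "conv_in_prob Ms sizes (\<lambda>(N3, N2, n). grp_contrast_msq N3 (Z N3 N2 n)) (sg\<^sup>2)"
proof (rule conv_in_prob_Chebyshev[where h="\<lambda>p. sg ^ 4 / real (fst p)"])
  show "((\<lambda>p. sg ^ 4 / real (fst p)) \<longlongrightarrow> 0) sizes"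
    by (rule tendsto_const_div_at_top[OF filterlim_sizes(1)])
qed (rule eventually_model, simp add: three_level_model.prob_space_model
      three_level_model.grp_contrast_msq_measurable three_level_model.grp_contrast_msq_variance)

lemma conv_grp_contrast_mean_sq:
  assumes "\<And>N3. N3 \<ge> 1 \<Longrightarrow> I N3 \<subseteq> {..<2*N3} \<and> card (I N3) = N3"
  shows "conv_in_prob Ms sizes (\<lambda>(N3, N2, n) \<omega>. (grp_contrast_mean (I N3) (Z N3 N2 n) \<omega>)\<^sup>2) 0"
proof (rule conv_in_prob_Markov[where h="\<lambda>p. 2 * sg\<^sup>2 / real (fst p)"], rule eventually_model, goal_cases)
  case (1 N3 N2 n)
  then have I: "I N3 \<subseteq> {..<2*N3}" "I N3 \<noteq> {}" "card (I N3) = N3"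
    using assms[of N3] by (auto simp: three_level_model_def)
  show ?case
    using three_level_model.grp_contrast_mean_sq_moments[OF 1 I(1,2)]
      three_level_model.grp_contrast_mean_measurable[OF 1 I(1,2)] I(3)
    by (simp add: three_level_model.prob_space_model[OF 1])
next
  case 2
  show ?case by (rule tendsto_const_div_at_top[OF filterlim_sizes(1)])
qed

lemma conv_grp_ss: "conv_in_prob Ms sizes (\<lambda>(N3, N2, n). grp_ss N3 (Z N3 N2 n)) (sg\<^sup>2)"
proof -
  let ?Q = "\<lambda>(N3, N2, n). grp_contrast_msq N3 (Z N3 N2 n)"
    and ?T = "\<lambda>(N3, N2, n) \<omega>. (grp_contrast_mean {..<N3} (Z N3 N2 n) \<omega>)\<^sup>2"
    and ?C = "\<lambda>(N3, N2, n) \<omega>. (grp_contrast_mean {N3..<2*N3} (Z N3 N2 n) \<omega>)\<^sup>2"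
  have "conv_in_prob Ms sizes (\<lambda>p \<omega>. ?T p \<omega> + ?C p \<omega>) (0 + 0)"
    by (rule conv_in_prob_continuous2[OF conv_grp_contrast_mean_sq conv_grp_contrast_mean_sq, where g="(+)"])
       (auto intro!: continuous_intros simp: borel_prod[symmetric])
  then have "conv_in_prob Ms sizes (\<lambda>p \<omega>. ?Q p \<omega> - (?T p \<omega> + ?C p \<omega>) / 4) (sg\<^sup>2 - (0 + 0) / 4)"
    by (rule conv_in_prob_continuous2[OF conv_grp_contrast_msq, where g="\<lambda>x y. x - y / 4"])
       (auto intro!: continuous_intros simp: borel_prod[symmetric])
  then have lim: "conv_in_prob Ms sizes (\<lambda>p \<omega>. ?Q p \<omega> - (?T p \<omega> + ?C p \<omega>) / 4) (sg\<^sup>2)"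
    by simp
  show ?thesis
  proof (rule conv_in_prob_cong[OF lim eventually_model], goal_cases)
    case (1 N3 N2 n)
    show ?case
      using three_level_model.grp_ss_measurable[OF 1] three_level_model.sizes_pos[OF 1]
      by (simp add: grp_ss_eq)
  qed
qed

lemma conv_err_contrast_msq: "conv_in_prob Ms sizes (\<lambda>(N3, N2, n). err_contrast_msq N3 N2 n (Z N3 N2 n)) 0"
proof (rule conv_in_prob_Markov[where h="\<lambda>p. se\<^sup>2 / real (snd (snd p))"], rule eventually_model, goal_cases)
  case (1 N3 N2 n)
  have "0 \<le> err_contrast_msq N3 N2 n (Z N3 N2 n) \<omega>" for \<omega>
    unfolding err_contrast_msq_def by (intro divide_nonneg_nonneg sum_nonneg) auto
  then show ?case
    using three_level_model.err_contrast_msq_moments[OF 1] three_level_model.err_contrast_msq_measurable[OF 1]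
    by (simp add: three_level_model.prob_space_model[OF 1])
next
  case 2
  show ?case by (rule tendsto_const_div_at_top[OF filterlim_sizes(2)])
qed

lemma conv_SS1_scaled:
  "conv_in_prob Ms sizes (\<lambda>(N3, N2, n) \<omega>.
     SS1 N3 N2 n (Yobs b0 tau xi dl N3 (Z N3 N2 n) \<omega>) / (4 * real N3 * real N2 * real n)) (sg\<^sup>2)"
proof -
  let ?A = "\<lambda>(N3, N2, n). grp_ss N3 (Z N3 N2 n)" and ?B = "\<lambda>(N3, N2, n). err_contrast_msq N3 N2 n (Z N3 N2 n)"
  have lower: "conv_in_prob Ms sizes (\<lambda>p \<omega>. ?A p \<omega> - 2 * sqrt (?A p \<omega> * ?B p \<omega>)) (sg\<^sup>2 - 2 * sqrt (sg\<^sup>2 * 0))"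
    by (rule conv_in_prob_continuous2[OF conv_grp_ss conv_err_contrast_msq, where g="\<lambda>x y. x - 2 * sqrt (x * y)"])
       (auto intro!: continuous_intros simp: borel_prod[symmetric])
  have upper: "conv_in_prob Ms sizes (\<lambda>p \<omega>. ?A p \<omega> + 2 * sqrt (?A p \<omega> * ?B p \<omega>) + ?B p \<omega>)
      (sg\<^sup>2 + 2 * sqrt (sg\<^sup>2 * 0) + 0)"
    by (rule conv_in_prob_continuous2[OF conv_grp_ss conv_err_contrast_msq, where g="\<lambda>x y. x + 2 * sqrt (x * y) + y"])
       (auto intro!: continuous_intros simp: borel_prod[symmetric])
  show ?thesis
  proof (rule conv_in_prob_sandwich[OF lower[simplified] upper[simplified] eventually_model], goal_cases)
    case (1 N3 N2 n)
    show ?case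
      using three_level_model.SS1_measurable[OF 1] three_level_model.sizes_pos[OF 1]
      by (auto intro: SS1_scaled_bounds)
  qed
qed

lemma conv_err_msq_scaled: "conv_in_prob Ms sizes (\<lambda>(N3, N2, n) \<omega>. err_msq N3 N2 n (Z N3 N2 n) \<omega> / n) 0"
proof (rule conv_in_prob_Markov[where h="\<lambda>p. 2 * se\<^sup>2 / real (snd (snd p))"], rule eventually_model, goal_cases)
  case (1 N3 N2 n)
  then have n: "n \<ge> 2" by (simp add: three_level_model_def)
  have "0 \<le> err_msq N3 N2 n (Z N3 N2 n) \<omega> / n" for \<omega>
    unfolding err_msq_def using n by (intro divide_nonneg_nonneg sum_nonneg) auto
  moreover have "2 * se\<^sup>2 \<le> real n * se\<^sup>2"
    using n by (intro mult_right_mono) auto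
  then have "real n * se\<^sup>2 / (real n - 1) / n \<le> 2 * se\<^sup>2 / n"
    using n by (simp add: field_simps)
  ultimately show ?case
    using three_level_model.err_msq_moments[OF 1] three_level_model.err_msq_measurable[OF 1]
    by (simp add: three_level_model.prob_space_model[OF 1])
next
  case 2
  show ?case by (rule tendsto_const_div_at_top[OF filterlim_sizes(2)])
qed

lemma conv_sigma_e_term:
  "conv_in_prob Ms sizes (\<lambda>(N3, N2, n) \<omega>.
     sigma_e_hat2 N3 N2 n (Yobs b0 tau xi dl N3 (Z N3 N2 n) \<omega>) * (1 - real N2) / (real n * real N2)) 0"
proof (rule conv_in_prob_dominated[OF conv_err_msq_scaled eventually_model], goal_cases)
  case (1 N3 N2 n)
  then have N2: "N2 \<ge> 1" and n: "n \<ge> 2" by (simp_all add: three_level_model_def)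
  have factor: "\<bar>1 - real N2\<bar> / (real n * real N2) \<le> 1 / real n"
    using N2 n by (simp add: field_simps)
  have "\<bar>sigma_e_hat2 N3 N2 n (Yobs b0 tau xi dl N3 (Z N3 N2 n) \<omega>) * (1 - real N2) / (real n * real N2)\<bar>
      \<le> err_msq N3 N2 n (Z N3 N2 n) \<omega> / real n" for \<omega>
  proof -
    note \<sigma> = sigma_e_hat2_bounds[OF three_level_model.sizes_pos[OF 1] n, of b0 tau xi dl "Z N3 N2 n" \<omega>]
    have "\<bar>sigma_e_hat2 N3 N2 n (Yobs b0 tau xi dl N3 (Z N3 N2 n) \<omega>) * (1 - real N2) / (real n * real N2)\<bar>
        = sigma_e_hat2 N3 N2 n (Yobs b0 tau xi dl N3 (Z N3 N2 n) \<omega>) * (\<bar>1 - real N2\<bar> / (real n * real N2))"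
      using \<sigma>(1) by (simp add: abs_mult)
    also have "\<dots> \<le> err_msq N3 N2 n (Z N3 N2 n) \<omega> * (1 / real n)"
      using \<sigma> factor by (intro mult_mono) auto
    finally show ?thesis by simp
  qed
  moreover have "(\<lambda>\<omega>. sigma_e_hat2 N3 N2 n (Yobs b0 tau xi dl N3 (Z N3 N2 n) \<omega>) * (1 - real N2) / (real n * real N2))
      \<in> borel_measurable (M N3 N2 n)"
    using three_level_model.sigma_e_hat2_measurable[OF 1] by measurable
  ultimately show ?case by simp
qed

lemma conv_var_hat_ratio:
  "conv_in_prob Ms sizes
     (\<lambda>(N3, N2, n) \<omega>. var_hat N3 N2 n (Yobs b0 tau xi dl N3 (Z N3 N2 n) \<omega>) / delta_hat_var N3 N2 n sg se) 1"
proof -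
  let ?V1 = "\<lambda>(N3, N2, n) \<omega>. sigma_e_hat2 N3 N2 n (Yobs b0 tau xi dl N3 (Z N3 N2 n) \<omega>) * (1 - real N2) / (real n * real N2)"
    and ?S1 = "\<lambda>(N3, N2, n) \<omega>. SS1 N3 N2 n (Yobs b0 tau xi dl N3 (Z N3 N2 n) \<omega>) / (4 * real N3 * real N2 * real n)"
    and ?den = "\<lambda>p. se\<^sup>2 / real (snd (snd p) * fst (snd p)) + sg\<^sup>2"
  have num: "conv_in_prob Ms sizes (\<lambda>p \<omega>. ?V1 p \<omega> + ?S1 p \<omega>) (0 + sg\<^sup>2)"
    by (rule conv_in_prob_continuous2[OF conv_sigma_e_term conv_SS1_scaled, where g="(+)"])
       (auto intro!: continuous_intros simp: borel_prod[symmetric])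
  have "(?den \<longlongrightarrow> 0 + sg\<^sup>2) sizes"
    by (intro tendsto_add tendsto_const tendsto_const_div_at_top filterlim_sizes(3))
  then have den: "conv_in_prob Ms sizes (\<lambda>p \<omega>. ?den p) (0 + sg\<^sup>2)"
    by (intro conv_in_prob_const eventually_model) (simp add: three_level_model.prob_space_model)
  have "conv_in_prob Ms sizes (\<lambda>p \<omega>. (?V1 p \<omega> + ?S1 p \<omega>) / ?den p) ((0 + sg\<^sup>2) / (0 + sg\<^sup>2))"
    using sd_pos
    by (intro conv_in_prob_continuous2[OF num den, where g="\<lambda>x y. x / y"])
       (auto intro!: continuous_intros simp: borel_prod[symmetric])
  then have ratio: "conv_in_prob Ms sizes (\<lambda>p \<omega>. (?V1 p \<omega> + ?S1 p \<omega>) / ?den p) 1"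
    using sd_pos by simp
  show ?thesis
  proof (rule conv_in_prob_cong[OF ratio eventually_model], goal_cases)
    case (1 N3 N2 n)
    note ratio_eq = var_hat_ratio_eq[OF three_level_model.sizes_pos[OF 1] sd_pos(3)]
    have "(\<lambda>\<omega>. var_hat N3 N2 n (Yobs b0 tau xi dl N3 (Z N3 N2 n) \<omega>) / delta_hat_var N3 N2 n sg se)
        \<in> borel_measurable (M N3 N2 n)"
      unfolding ratio_eq
      using three_level_model.sigma_e_hat2_measurable[OF 1] three_level_model.SS1_measurable[OF 1]
      by measurable
    then show ?case by (simp add: ratio_eq mult.commute)
  qed
qed

lemma eventually_std_normal_noise:
  "\<forall>\<^sub>F p in sizes.
     (\<lambda>(N3, N2, n) \<omega>. delta_hat_noise N3 N2 n (Z N3 N2 n) \<omega> / sqrt (delta_hat_var N3 N2 n sg se)) p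
       \<in> borel_measurable (Ms p) \<and>
     (\<forall>t. measure (Ms p) {\<omega>\<in>space (Ms p).
        (\<lambda>(N3, N2, n) \<omega>. delta_hat_noise N3 N2 n (Z N3 N2 n) \<omega> / sqrt (delta_hat_var N3 N2 n sg se)) p \<omega> \<le> t}
       = Phi t)"
  by (rule eventually_model)
     (simp add: three_level_model.std_normal_noise_measurable three_level_model.prob_std_normal_noise_le)

end

theorem theorem3p3:
  fixes b0 tau xi dl s3 s2 sg se :: real
    and M :: "nat \<Rightarrow> nat \<Rightarrow> nat \<Rightarrow> 'a measure"
    and Z :: "nat \<Rightarrow> nat \<Rightarrow> nat \<Rightarrow> eff \<Rightarrow> 'a \<Rightarrow> real"
  assumes "s3 > 0" "s2 > 0" "sg > 0" "se > 0"
    and "\<And>N3 N2 n. N3 \<ge> 1 \<Longrightarrow> N2 \<ge> 1 \<Longrightarrow> n \<ge> 2 \<Longrightarrow>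
           model_effects (M N3 N2 n) N3 N2 n s3 s2 sg se (Z N3 N2 n)"
  shows "\<forall>x. ((\<lambda>(N3, N2, n). measure (M N3 N2 n)
              {\<omega> \<in> space (M N3 N2 n).
                 var_hat N3 N2 n (Yobs b0 tau xi dl N3 (Z N3 N2 n) \<omega>) > 0 \<and>
                 T_stat dl N3 N2 n (Yobs b0 tau xi dl N3 (Z N3 N2 n) \<omega>) \<le> x})
            \<longlongrightarrow> Phi x) (at_top \<times>\<^sub>F at_top \<times>\<^sub>F at_top)"
proof
  fix x :: real
  interpret three_level_family M s3 s2 sg se Z
    using assms by unfold_locales
  note studentised = tendsto_prob_div_sqrt_Phi[OF conv_var_hat_ratio eventually_std_normal_noise, of b0 tau xi dl x]
  show "((\<lambda>(N3, N2, n). measure (M N3 N2 n)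
              {\<omega> \<in> space (M N3 N2 n).
                 var_hat N3 N2 n (Yobs b0 tau xi dl N3 (Z N3 N2 n) \<omega>) > 0 \<and>
                 T_stat dl N3 N2 n (Yobs b0 tau xi dl N3 (Z N3 N2 n) \<omega>) \<le> x})
            \<longlongrightarrow> Phi x) (at_top \<times>\<^sub>F at_top \<times>\<^sub>F at_top)"
    by (rule tendsto_cong[THEN iffD1, OF eventually_model studentised])
       (simp add: three_level_model.T_stat_event_eq)
qed

end
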